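(* Let $g\in V$ be represented by $(T_-,T_+,\sigma)$ and let $D$ be the labelled diagram obtained from the closed labelled strand diagram $D_0(g)$ by applying labelled Rule I repeatedly, in any order, until no edge goes from a merge vertex to a split vertex. (i) If $D$ is a finite disjoint union of closed loops with no vertices, with labels $l_1,\dots,l_k$, then $g$ has finite order, equal to $\operatorname{lcm}(l_1,\dots,l_k)$. (ii) If $D$ has at least one vertex, then $g$ has infinite order; moreover $D$ contains an oriented cycle, and for every oriented cycle of $D$ consisting of merge vertices, the sum of the labels along it is the length of a finite orbit of the action of $g$ on $\mathfrak C$.
   Context: The Cantor set $\mathfrak C=\{0,1\}^{\mathbb N}$. A finite rooted binary tree with $n$ leaves, ordered left to right, determines a partition of $\mathfrak C$ into $n$ cones $u_1\mathfrak C,\dots,u_n\mathfrak C$, where $u_i$ is the finite binary address of the $i$-th leaf. A triple $(T_-,T_+,\sigma)$, with $T_\pm$ having $n$ leaves and $\sigma$ a bijection of $\{1,\dots,n\}$, represents the element $g$ of Thompson's group $V$ given by $g(u_i w)=v_{\sigma(i)}w$, where $u_i$ (resp. $v_j$) are the leaf addresses of $T_-$ (resp. $T_+$). Closed labelled strand diagram $D_0(g)$: a finite directed graph whose $n-1$ split vertices are the internal nodes of $T_-$ (one incoming edge, two outgoing edges ordered left/right, directed root-to-leaves) and whose $n-1$ merge vertices are the internal nodes of $T_+$ (two incoming edges ordered left/right, one outgoing edge, directed leaves-to-root); the $i$-th leaf of $T_-$ is joined to the $\sigma(i)$-th leaf of $T_+$, and the root of $T_+$ is joined to the root of $T_-$,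 erasing bivalent points so these become single edges (a single loop if $n=1$). Each edge carries a nonnegative integer label: $1$ on the edge through the glued roots, $0$ elsewhere. Labelled Rule I: if an edge $e$ with label $y$ goes from a merge vertex $m$ (incoming edges $x_1$ left, $x_2$ right) to a split vertex $s$ (outgoing edges $z_1$ left, $z_2$ right), delete $m,s,e$ and for $i=1,2$ join strand $x_i$ to strand $z_i$ through $e$; each resulting edge gets as label the sum, with multiplicity, of the labels of the old edge-pieces composing it (e.g. $x_1+y+z_1$ and $x_2+y+z_2$ when the four edges are distinct; $x_1+x_2+2y+z_2$ when $x_2=z_1$). Strands closing up on themselves become vertex-free closed loops labelled by the sum of labels along them. *)

theory Defs
  imports Main "HOL-Library.Multiset"
begin

text \<open>The Cantor set is modelled as infinite binary sequences nat => bool;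
  finite binary addresses are bool lists. Convention: False = 0 = left, True = 1 = right.\<close>

datatype tree = Leaf | Node tree tree

fun leaves :: "tree \<Rightarrow> bool list list" where
  "leaves Leaf = [[]]"
| "leaves (Node l r) = map (Cons False) (leaves l) @ map (Cons True) (leaves r)"

fun inodes :: "tree \<Rightarrow> bool list set" where
  "inodes Leaf = {}"
| "inodes (Node l r) = {[]} \<union> Cons False ` inodes l \<union> Cons True ` inodes r"

definition in_cone :: "bool list \<Rightarrow> (nat \<Rightarrow> bool) \<Rightarrow> bool" where
  "in_cone u x \<longleftrightarrow> (\<forall>k<length u. x k = u ! k)"

definition prepend :: "bool list \<Rightarrow> (nat \<Rightarrow> bool) \<Rightarrow> (nat \<Rightarrow> bool)" where
  "prepend u w = (\<lambda>k. if k < length u then u ! k else w (k - length u))"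

text \<open>The element g of V represented by (Tm, Tp, sigma), with sigma a bijection of
  {0..<n} (0-indexed leaves): g(u_i w) = v_(sigma i) w.\<close>
definition velem :: "tree \<Rightarrow> tree \<Rightarrow> (nat \<Rightarrow> nat) \<Rightarrow> (nat \<Rightarrow> bool) \<Rightarrow> (nat \<Rightarrow> bool)" where
  "velem Tm Tp \<sigma> x =
     (let i = (THE i. i < length (leaves Tm) \<and> in_cone (leaves Tm ! i) x)
      in prepend (leaves Tp ! \<sigma> i) (\<lambda>k. x (k + length (leaves Tm ! i))))"

text \<open>Split vertices and merge vertices are named by bool lists (addresses of internal
  nodes of Tm resp. Tp); they live in two separate sets. An edge is identified by its
  outgoing port; tg maps outgoing ports to incoming ports.
  SOut s b: the b-th outgoing edge of split s (False = left);  MOut m: outgoing edge of merge m;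
  SIn s: incoming edge of split s;  MIn m b: b-th incoming edge of merge m (False = left).\<close>

datatype oport = SOut "bool list" bool | MOut "bool list"
datatype iport = SIn "bool list" | MIn "bool list" bool
datatype vtx = SV "bool list" | MV "bool list"

record sdiag =
  sS :: "bool list set"
  sM :: "bool list set"
  stg :: "oport \<Rightarrow> iport"
  slb :: "oport \<Rightarrow> nat"
  sloops :: "nat multiset"        \<comment> \<open>labels of the vertex-free closed loops\<close>

definition oports :: "sdiag \<Rightarrow> oport set" where
  "oports D = {SOut u b | u b. u \<in> sS D} \<union> {MOut w | w. w \<in> sM D}"

fun osrc :: "oport \<Rightarrow> vtx" where
  "osrc (SOut u b) = SV u"
| "osrc (MOut w) = MV w"

fun idst :: "iport \<Rightarrow> vtx" where
  "idst (SIn u) = SV u"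
| "idst (MIn w b) = MV w"

text \<open>Edge leaving the T_+ node w (internal node or leaf): to its parent in T_+,
  or, for the root of T_+, to the root of T_-.\<close>
definition tp_up :: "bool list \<Rightarrow> iport" where
  "tp_up w = (if w = [] then SIn [] else MIn (butlast w) (last w))"

definition D0 :: "tree \<Rightarrow> tree \<Rightarrow> (nat \<Rightarrow> nat) \<Rightarrow> sdiag" where
  "D0 Tm Tp \<sigma> =
     \<lparr> sS = inodes Tm,
       sM = inodes Tp,
       stg = (\<lambda>p. case p of
                 SOut u b \<Rightarrow>
                   (if u @ [b] \<in> inodes Tm then SIn (u @ [b])
                    else tp_up (leaves Tp ! \<sigma> (THE i. i < length (leaves Tm) \<and> leaves Tm ! i = u @ [b])))
               | MOut w \<Rightarrow> tp_up w),
       slb = (\<lambda>p. if p = MOut [] then 1 else 0),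
       sloops = (if length (leaves Tm) = 1 then {#1#} else {#}) \<rparr>"

text \<open>Following a strand from outgoing port o through the deleted pair (m,s): whenever it
  enters m on side b, it continues through the edge e = MOut m and leaves s on side b. Fuel 3 is more than enough
  (at most two passes through e are possible).\<close>
fun chase :: "nat \<Rightarrow> (oport \<Rightarrow> iport) \<Rightarrow> (oport \<Rightarrow> nat) \<Rightarrow> bool list \<Rightarrow> bool list \<Rightarrow> oport
              \<Rightarrow> iport \<times> nat" where
  "chase 0 t l m s p = (t p, l p)"
| "chase (Suc k) t l m s p =
     (case t p of
        MIn w b \<Rightarrow> (if w = m then (let r = chase k t l m s (SOut s b) in (fst r, l p + l (MOut m) + snd r))
                    else (t p, l p))
      | SIn u \<Rightarrow> (t p, l p))"

text \<open>Closed loops created by Rule I (strands through m,s closing on themselves).\<close>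
definition new_loops :: "sdiag \<Rightarrow> bool list \<Rightarrow> bool list \<Rightarrow> nat multiset" where
  "new_loops D m s =
     (let t = stg D; y = slb D (MOut m); z1 = slb D (SOut s False); z2 = slb D (SOut s True)
      in (if t (SOut s False) = MIn m False then {# z1 + y #} else {#})
       + (if t (SOut s True) = MIn m True then {# z2 + y #} else {#})
       + (if t (SOut s False) = MIn m True \<and> t (SOut s True) = MIn m False
          then {# z1 + z2 + 2 * y #} else {#}))"

definition rule1_apply :: "sdiag \<Rightarrow> bool list \<Rightarrow> bool list \<Rightarrow> sdiag" where
  "rule1_apply D m s =
     \<lparr> sS = sS D - {s},
       sM = sM D - {m},
       stg = (\<lambda>p. fst (chase 3 (stg D) (slb D) m s p)),
       slb = (\<lambda>p. snd (chase 3 (stg D) (slb D) m s p)),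
       sloops = sloops D + new_loops D m s \<rparr>"

definition rule1_step :: "sdiag \<Rightarrow> sdiag \<Rightarrow> bool" where
  "rule1_step D D' \<longleftrightarrow>
     (\<exists>m \<in> sM D. \<exists>s \<in> sS D. stg D (MOut m) = SIn s \<and> D' = rule1_apply D m s)"

definition reduced :: "sdiag \<Rightarrow> bool" where
  "reduced D \<longleftrightarrow> \<not> (\<exists>m \<in> sM D. \<exists>s \<in> sS D. stg D (MOut m) = SIn s)"

definition is_cycle :: "sdiag \<Rightarrow> oport list \<Rightarrow> bool" where
  "is_cycle D es \<longleftrightarrow> es \<noteq> [] \<and> set es \<subseteq> oports D \<and> distinct (map osrc es) \<and>
     (\<forall>i < length es. idst (stg D (es ! i)) = osrc (es ! ((i + 1) mod length es)))"

definition merge_cycle :: "sdiag \<Rightarrow> oport list \<Rightarrow> bool" where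
  "merge_cycle D es \<longleftrightarrow> is_cycle D es \<and> (\<forall>e \<in> set es. \<exists>w. osrc e = MV w)"

definition finite_orbit_length :: "('a \<Rightarrow> 'a) \<Rightarrow> nat \<Rightarrow> bool" where
  "finite_orbit_length f L \<longleftrightarrow>
     (\<exists>x. finite (range (\<lambda>j. (f ^^ j) x)) \<and> card (range (\<lambda>j. (f ^^ j) x)) = L)"

end

theory Submission
  imports Defs
begin

(* A token is an edge of a strand diagram together with a point of the Cantor set. At a split
   vertex the token reads its first bit to choose the outgoing edge, at a merge vertex it records
   the side it came in on as a new first bit. In D_0(g) a token leaving the root edge with x
   next returns to it carrying g x: g is the first-return map of this token dynamics to the root
   edge, and the label of an edge counts the passages through the root edge.

   Rule I preserves this picture. For every diagram D obtained from D_0(g), the token dynamics of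
   D is the first-return map of that of D_0(g) to the edges of D, the label of an edge of D
   counting root passages along the corresponding path; every closed loop is a periodic token
   orbit whose label is the least period of a periodic point of g; and every point of the Cantor
   set either still reaches an edge of D or has a loop label as a period.

   (i) Without vertices every point has a loop label as period and each label is a least period,
   so the order of g is the lcm of the labels. (ii) If D is reduced and has vertices, every merge
   vertex feeds into a merge vertex, so there is a cycle of merge vertices. Running around it
   pushes the same nonempty word in front of the token's point, so some token orbit is infinite;
   if g had finite order, all token orbits of D_0(g) would be finite. A token whose point is the
   periodic word of the cycle is periodic, and its label sum is the least period of a periodic
   point of g. *)

section \<open>Binary trees and cones of the Cantor set\<close>

lemma Cons_mem_image_Cons_iff [simp]: "a # x \<in> Cons b ` S \<longleftrightarrow> a = b \<and> x \<in> S"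
  by auto

lemma leaves_neq_Nil: "leaves T \<noteq> []"
  by (induction T) auto

lemma distinct_leaves: "distinct (leaves T)"
  by (induction T) (auto simp: distinct_map)

lemma leaves_prefix_free: "u \<in> set (leaves T) \<Longrightarrow> u @ r \<in> set (leaves T) \<Longrightarrow> r = []"
proof (induction T arbitrary: u)
  case (Node l r')
  then show ?case by (cases u) auto
qed auto

lemma prefix_of_leaf_in_inodes: "u @ v \<in> set (leaves T) \<Longrightarrow> v \<noteq> [] \<Longrightarrow> u \<in> inodes T"
proof (induction T arbitrary: u)
  case (Node l r)
  then show ?case by (cases u) auto
qed auto

lemma leaf_notin_inodes: "u \<in> set (leaves T) \<Longrightarrow> u \<notin> inodes T"
proof (induction T arbitrary: u)
  case (Node l r)
  then show ?case by (cases u) auto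
qed auto

lemma child_in_leaves: "u \<in> inodes T \<Longrightarrow> u @ [b] \<notin> inodes T \<Longrightarrow> u @ [b] \<in> set (leaves T)"
proof (induction T arbitrary: u)
  case (Node l r)
  show ?case
  proof (cases u)
    case Nil
    then show ?thesis using Node.prems by (cases b; cases l; cases r) auto
  next
    case (Cons a u')
    then show ?thesis using Node by (cases a) auto
  qed
qed auto

lemma butlast_in_inodes: "w \<in> inodes T \<Longrightarrow> w \<noteq> [] \<Longrightarrow> butlast w \<in> inodes T"
proof (induction T arbitrary: w)
  case (Node l r)
  then obtain a w' where w: "w = a # w'" by (cases w) auto
  then show ?case using Node by (cases "w' = []"; cases a) auto
qed auto

lemma butlast_leaf_in_inodes: "v \<in> set (leaves T) \<Longrightarrow> v \<noteq> [] \<Longrightarrow> butlast v \<in> inodes T"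
  using prefix_of_leaf_in_inodes[of "butlast v" "[last v]" T] by simp

lemma finite_inodes: "finite (inodes T)"
  by (induction T) auto

lemma card_inodes: "card (inodes T) + 1 = length (leaves T)"
proof (induction T)
  case (Node l r)
  have "[] \<notin> Cons False ` inodes l \<union> Cons True ` inodes r"
    and "Cons False ` inodes l \<inter> Cons True ` inodes r = {}" by auto
  then have "card (inodes (Node l r)) = 1 + card (inodes l) + card (inodes r)"
    using finite_inodes[of l] finite_inodes[of r] by (simp add: card_Un_disjoint card_image)
  then show ?case using Node by simp
qed simp

lemma length_leaves_eq_1_iff: "length (leaves T) = 1 \<longleftrightarrow> T = Leaf"
proof (cases T)
  case (Node l r)
  then show ?thesis using leaves_neq_Nil[of l] leaves_neq_Nil[of r] by (cases "leaves l") auto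
qed simp

lemma Nil_in_inodes: "T \<noteq> Leaf \<Longrightarrow> [] \<in> inodes T"
  by (cases T) auto

lemma Nil_notin_leaves: "T \<noteq> Leaf \<Longrightarrow> [] \<notin> set (leaves T)"
  by (cases T) auto

fun height :: "tree \<Rightarrow> nat" where
  "height Leaf = 0"
| "height (Node l r) = Suc (max (height l) (height r))"

lemma length_inode_less_height: "u \<in> inodes T \<Longrightarrow> length u < height T"
  by (induction T arbitrary: u) fastforce+

lemma ex_leaf_in_cone: "\<exists>u \<in> set (leaves T). in_cone u x"
proof (induction T arbitrary: x)
  case Leaf
  then show ?case by (auto simp: in_cone_def)
next
  case (Node l r)
  obtain u where "u \<in> set (leaves (if x 0 then r else l))" "in_cone u (\<lambda>k. x (Suc k))"
    using Node.IH[of "\<lambda>k. x (Suc k)"] by (cases "x 0") auto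
  then show ?case
    by (intro bexI[of _ "x 0 # u"]) (auto simp: in_cone_def less_Suc_eq_0_disj split: if_splits)
qed

lemma in_cone_prefix:
  assumes "in_cone u x" "in_cone v x" "length u \<le> length v"
  shows "v = u @ drop (length u) v"
proof -
  have "take (length u) v = u"
    using assms by (intro nth_equalityI) (auto simp: in_cone_def)
  then show ?thesis by (metis append_take_drop_id)
qed

lemma leaf_in_cone_unique:
  assumes "u \<in> set (leaves T)" "v \<in> set (leaves T)" "in_cone u x" "in_cone v x"
  shows "u = v"
  using in_cone_prefix[OF assms(3,4)] in_cone_prefix[OF assms(4,3)]
    leaves_prefix_free[OF assms(1)] leaves_prefix_free[OF assms(2)] assms(1,2)
  by (metis append_Nil2 nat_le_linear)

lemma in_cone_prepend: "in_cone u (prepend u z)"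
  by (auto simp: in_cone_def prepend_def)

lemma prepend_drop: "in_cone u x \<Longrightarrow> prepend u (\<lambda>k. x (k + length u)) = x"
  by (auto simp: in_cone_def prepend_def fun_eq_iff)

lemma prepend_append: "prepend (u @ v) z = prepend u (prepend v z)"
  by (auto simp: prepend_def fun_eq_iff nth_append)

lemma prepend_Nil [simp]: "prepend [] z = z"
  by (auto simp: prepend_def)

lemma prepend_Cons_0 [simp]: "prepend (c # u) z 0 = c"
  by (simp add: prepend_def)

lemma prepend_Cons_Suc [simp]: "prepend (c # u) z (Suc k) = prepend u z k"
  by (simp add: prepend_def)

lemma prepend_cancel: "prepend u z = prepend u z' \<longleftrightarrow> z = z'"
  by (auto simp: fun_eq_iff prepend_def dest: spec[of _ "_ + length u"])

lemma inj_prepend_power: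
  assumes "c = a # c'"
  shows "inj (\<lambda>r. prepend (concat (replicate r c)) (\<lambda>_. \<not> a))"
proof -
  define x0 where "x0 = (\<lambda>_::nat. \<not> a)"
  have "prepend (concat (replicate r c)) x0 \<noteq> prepend (concat (replicate r' c)) x0" if "r < r'" for r r'
  proof
    assume "prepend (concat (replicate r c)) x0 = prepend (concat (replicate r' c)) x0"
    moreover have "replicate r' c = replicate r c @ replicate (r' - r) c"
      using that by (simp add: replicate_add[symmetric])
    ultimately have "x0 = prepend (concat (replicate (r' - r) c)) x0"
      by (simp add: prepend_append prepend_cancel)
    moreover have "concat (replicate (r' - r) c) = a # c' @ concat (replicate (r' - r - 1) c)"
      using that assms by (cases "r' - r") auto
    ultimately have "x0 0 = a"
      by (metis prepend_Cons_0)
    then show False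
      by (simp add: x0_def)
  qed
  then show ?thesis
    unfolding x0_def[symmetric] by (intro injI) (metis linorder_neqE_nat)
qed

lemma prepend_leaf_inj:
  assumes "u \<in> set (leaves T)" "v \<in> set (leaves T)" "prepend u z = prepend v z'"
  shows "u = v \<and> z = z'"
proof
  show "u = v"
    using leaf_in_cone_unique[OF assms(1,2) in_cone_prepend, of z] assms(3) in_cone_prepend[of v z'] by simp
  then show "z = z'"
    using assms(3) prepend_cancel by simp
qed

lemma velem_on_cone:
  assumes "i < length (leaves Tm)" "in_cone (leaves Tm ! i) y"
  shows "velem Tm Tp \<sigma> y = prepend (leaves Tp ! \<sigma> i) (\<lambda>k. y (k + length (leaves Tm ! i)))"
proof -
  have "(THE j. j < length (leaves Tm) \<and> in_cone (leaves Tm ! j) y) = i"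
  proof (rule the_equality)
    fix j assume "j < length (leaves Tm) \<and> in_cone (leaves Tm ! j) y"
    then show "j = i"
      using assms leaf_in_cone_unique[of "leaves Tm ! j" Tm "leaves Tm ! i" y] distinct_leaves[of Tm]
      by (simp add: nth_eq_iff_index_eq)
  qed (use assms in simp)
  then show ?thesis by (simp add: velem_def)
qed

section \<open>Walks, least periods and induced maps\<close>

lemma funpow_add_apply: "(f ^^ (m + n)) x = (f ^^ n) ((f ^^ m) x)"
  by (simp add: funpow_add add.commute[of m])

definition walk_sum :: "('s \<Rightarrow> 's) \<Rightarrow> ('s \<Rightarrow> nat) \<Rightarrow> 's \<Rightarrow> nat \<Rightarrow> nat" where
  "walk_sum F w s n = (\<Sum>i<n. w ((F ^^ i) s))"

lemma walk_sum_0 [simp]: "walk_sum F w s 0 = 0"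
  by (simp add: walk_sum_def)

lemma walk_sum_Suc: "walk_sum F w s (Suc n) = walk_sum F w s n + w ((F ^^ n) s)"
  by (simp add: walk_sum_def)

lemma walk_sum_add: "walk_sum F w s (m + n) = walk_sum F w s m + walk_sum F w ((F ^^ m) s) n"
  by (induction n) (simp_all add: walk_sum_Suc funpow_add_apply)

lemma walk_sum_Suc_shift: "walk_sum F w s (Suc n) = w s + walk_sum F w (F s) n"
  using walk_sum_add[of F w s 1 n] by (simp add: walk_sum_def)

lemma walk_sum_eq_0_iff: "walk_sum F w s n = 0 \<longleftrightarrow> (\<forall>i<n. w ((F ^^ i) s) = 0)"
  by (auto simp: walk_sum_def)

definition least_period :: "('a \<Rightarrow> 'a) \<Rightarrow> 'a \<Rightarrow> nat \<Rightarrow> bool" where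
  "least_period f x n \<longleftrightarrow> 0 < n \<and> (f ^^ n) x = x \<and> (\<forall>j. 0 < j \<and> j < n \<longrightarrow> (f ^^ j) x \<noteq> x)"

lemma least_period_exists:
  assumes "0 < k" "(f ^^ k) x = x"
  shows "\<exists>n. least_period f x n"
proof -
  define n where "n = (LEAST n. 0 < n \<and> (f ^^ n) x = x)"
  have "0 < n \<and> (f ^^ n) x = x"
    unfolding n_def by (rule LeastI[of _ k]) (use assms in simp)
  moreover have "(f ^^ j) x \<noteq> x" if "0 < j" "j < n" for j
    using not_less_Least[of j "\<lambda>n. 0 < n \<and> (f ^^ n) x = x"] that by (simp add: n_def)
  ultimately show ?thesis by (auto simp: least_period_def)
qed

lemma least_period_dvd:
  assumes "least_period f x n" "(f ^^ k) x = x"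
  shows "n dvd k"
proof -
  have "(f ^^ (k mod n)) x = x"
    using assms funpow_mod_eq[where f = f and n = n and x = x and m = k] by (simp add: least_period_def)
  then have "k mod n = 0"
    using assms(1) by (simp add: least_period_def) (meson mod_less_divisor neq0_conv)
  then show ?thesis by auto
qed

lemma least_period_inj_on:
  assumes "least_period f x n"
  shows "inj_on (\<lambda>j. (f ^^ j) x) {..<n}"
proof -
  have *: "(f ^^ i) x \<noteq> (f ^^ j) x" if "i < j" "j < n" for i j
  proof
    assume "(f ^^ i) x = (f ^^ j) x"
    then have "(f ^^ (i + (n - j))) x = (f ^^ (j + (n - j))) x"
      by (simp only: funpow_add_apply)
    then have "(f ^^ (i + (n - j))) x = x"
      using that assms by (simp add: least_period_def)
    then show False
      using assms that by (simp add: least_period_def)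
  qed
  show ?thesis
    by (rule inj_onI) (metis * lessThan_iff linorder_neqE_nat)
qed

lemma least_period_funpow:
  assumes "least_period f x n"
  shows "least_period f ((f ^^ a) x) n"
proof -
  have n: "0 < n" "(f ^^ n) x = x"
    using assms by (auto simp: least_period_def)
  have "(f ^^ j) ((f ^^ a) x) \<noteq> (f ^^ a) x" if "0 < j" "j < n" for j
  proof
    assume "(f ^^ j) ((f ^^ a) x) = (f ^^ a) x"
    then have "(f ^^ ((a + j) mod n)) x = (f ^^ (a mod n)) x"
      using funpow_mod_eq[OF n(2)] by (simp add: funpow_add_apply)
    then have "(a + j) mod n = a mod n"
      using inj_onD[OF least_period_inj_on[OF assms]] n(1) by simp
    then have "n dvd j"
      using mod_eq_dvd_iff_nat[of a "a + j" n] by simp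
    then show False
      using that by (auto dest: dvd_imp_le)
  qed
  moreover have "(f ^^ n) ((f ^^ a) x) = (f ^^ a) x"
    using n(2) by (metis funpow_add_apply add.commute)
  ultimately show ?thesis
    using n(1) by (simp add: least_period_def)
qed

lemma least_period_orbit:
  assumes "least_period f x n"
  shows "finite (range (\<lambda>j. (f ^^ j) x)) \<and> card (range (\<lambda>j. (f ^^ j) x)) = n"
proof -
  have n: "0 < n" "(f ^^ n) x = x"
    using assms by (auto simp: least_period_def)
  have "range (\<lambda>j. (f ^^ j) x) = (\<lambda>j. (f ^^ j) x) ` {..<n}"
    using funpow_mod_eq[OF n(2)] n(1) by (auto intro!: image_eqI[where x = "_ mod n"])
  then show ?thesis
    using least_period_inj_on[OF assms] by (simp add: card_image)
qed

lemma finite_invariant_set_has_periodic_point: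
  assumes "finite A" "f ` A \<subseteq> A" "a \<in> A"
  shows "\<exists>x\<in>A. \<exists>n. least_period f x n"
proof -
  have orbit_in_A: "(f ^^ i) a \<in> A" for i
    using assms(2,3) by (induction i) auto
  have "card ((\<lambda>i. (f ^^ i) a) ` {..card A}) < card {..card A}"
    using card_mono[OF assms(1)] orbit_in_A by (simp add: image_subset_iff le_imp_less_Suc)
  then have "\<not> inj_on (\<lambda>i. (f ^^ i) a) {..card A}"
    by (rule pigeonhole)
  then obtain i j where "i \<noteq> j" "(f ^^ i) a = (f ^^ j) a"
    by (auto simp: inj_on_def)
  then obtain i j where ij: "i < j" "(f ^^ i) a = (f ^^ j) a"
    by (metis linorder_neqE_nat)
  have "(f ^^ (j - i)) ((f ^^ i) a) = (f ^^ (i + (j - i))) a"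
    by (simp only: funpow_add_apply)
  then have "(f ^^ (j - i)) ((f ^^ i) a) = (f ^^ i) a"
    using ij by simp
  then obtain n where "least_period f ((f ^^ i) a) n"
    using least_period_exists[of "j - i" f] ij(1) by auto
  then show ?thesis
    using orbit_in_A by blast
qed

lemma finite_orbit_if_eventually_periodic:
  assumes "0 < c" "(f ^^ c) ((f ^^ t0) x) = (f ^^ t0) x"
  shows "finite (range (\<lambda>t. (f ^^ t) x))"
proof -
  have "(f ^^ t) x \<in> (\<lambda>t. (f ^^ t) x) ` {..<t0 + c}" for t
  proof (cases "t < t0")
    case False
    then have "(f ^^ t) x = (f ^^ (t - t0)) ((f ^^ t0) x)"
      using funpow_add_apply[of t0 "t - t0" f x] by simp
    also have "\<dots> = (f ^^ ((t - t0) mod c)) ((f ^^ t0) x)"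
      using funpow_mod_eq[OF assms(2)] by simp
    also have "\<dots> = (f ^^ (t0 + (t - t0) mod c)) x"
      by (rule funpow_add_apply[symmetric])
    finally show ?thesis
      by (rule image_eqI) (use assms(1) in simp)
  qed simp
  then have "range (\<lambda>t. (f ^^ t) x) \<subseteq> (\<lambda>t. (f ^^ t) x) ` {..<t0 + c}"
    by blast
  then show ?thesis
    by (rule finite_subset) simp
qed

lemma order_eq_Lcm:
  fixes L :: "nat set"
  assumes "finite L" and periodic: "\<forall>y. \<exists>l\<in>L. (f ^^ l) y = y"
    and least: "\<forall>l\<in>L. \<exists>z. least_period f z l"
  shows "(\<exists>k>0. f ^^ k = id) \<and> (LEAST k. 0 < k \<and> f ^^ k = id) = Lcm L"
proof -
  have "0 \<notin> L"
    using least by (auto simp: least_period_def)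
  then have L_pos: "0 < Lcm L"
    using Lcm_0_iff[OF assms(1)] by (simp add: gr0I)
  have id_L: "f ^^ Lcm L = id"
  proof
    fix y
    obtain l where l: "l \<in> L" "(f ^^ l) y = y"
      using periodic by blast
    then have "(f ^^ (Lcm L mod l)) y = y"
      using dvd_Lcm[OF l(1)] by simp
    then show "(f ^^ Lcm L) y = id y"
      using funpow_mod_eq[OF l(2), of "Lcm L"] by simp
  qed
  have "Lcm L dvd k" if "f ^^ k = id" for k
  proof (rule Lcm_least)
    fix l assume "l \<in> L"
    then obtain z where "least_period f z l"
      using least by blast
    then show "l dvd k"
      using least_period_dvd that by (metis id_apply)
  qed
  then have "(LEAST k. 0 < k \<and> f ^^ k = id) = Lcm L"
    using L_pos id_L by (intro Least_equality) (auto dest: dvd_imp_le)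
  then show ?thesis
    using L_pos id_L by auto
qed

definition cycle_weight :: "('s \<Rightarrow> 's) \<Rightarrow> ('s \<Rightarrow> nat) \<Rightarrow> 's \<Rightarrow> nat \<Rightarrow> bool" where
  "cycle_weight F w s l \<longleftrightarrow> (\<exists>n. least_period F s n \<and> walk_sum F w s n = l)"

lemma cycle_weight_funpow:
  assumes "cycle_weight F w s l"
  shows "cycle_weight F w ((F ^^ a) s) l"
proof -
  obtain n where n: "least_period F s n" "walk_sum F w s n = l"
    using assms by (auto simp: cycle_weight_def)
  have "walk_sum F w s a + walk_sum F w ((F ^^ a) s) n = walk_sum F w s n + walk_sum F w s a"
    using walk_sum_add[of F w s a n] walk_sum_add[of F w s n a] n(1)
    by (simp add: least_period_def add.commute)
  then show ?thesis
    unfolding cycle_weight_def using n least_period_funpow[OF n(1), of a] by auto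
qed

lemma inj_on_funpow: "inj_on f U \<Longrightarrow> f ` U \<subseteq> U \<Longrightarrow> inj_on (f ^^ n) U"
proof (induction n)
  case (Suc n)
  have "(f ^^ n) ` U \<subseteq> U"
    using Suc.prems(2) by (induction n) auto
  then have "inj_on (f \<circ> f ^^ n) U"
    using Suc by (intro comp_inj_on) (auto intro: inj_on_subset)
  then show ?case
    by (simp add: comp_def)
qed simp

definition excursion :: "('s \<Rightarrow> 's) \<Rightarrow> ('s \<Rightarrow> nat) \<Rightarrow> ('s \<Rightarrow> bool) \<Rightarrow> 's \<Rightarrow> 's \<Rightarrow> nat \<Rightarrow> bool"
  where "excursion F w V s t l \<longleftrightarrow>
    (\<exists>n>0. (F ^^ n) s = t \<and> (\<forall>i. 0 < i \<and> i < n \<longrightarrow> \<not> V ((F ^^ i) s)) \<and> walk_sum F w s n = l)"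

lemma excursion_step: "excursion F w V s (F s) (w s)"
  unfolding excursion_def by (intro exI[of _ 1]) (simp add: walk_sum_def)

lemma excursion_Cons:
  assumes "\<not> V (F s)" "excursion F w V (F s) t l"
  shows "excursion F w V s t (w s + l)"
proof -
  obtain n where n: "0 < n" "(F ^^ n) (F s) = t" "\<forall>i. 0 < i \<and> i < n \<longrightarrow> \<not> V ((F ^^ i) (F s))"
    "walk_sum F w (F s) n = l"
    using assms(2) by (auto simp: excursion_def)
  have "\<not> V ((F ^^ Suc i) s)" if "i < n" for i
    using that assms(1) n(3) by (cases "i = 0") (auto simp: funpow_Suc_right simp del: funpow.simps)
  then have "\<not> V ((F ^^ i) s)" if "0 < i" "i < Suc n" for i
    using that by (metis Suc_less_SucD gr0_implies_Suc)
  then show ?thesis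
    unfolding excursion_def using n
    by (intro exI[of _ "Suc n"]) (simp add: walk_sum_Suc_shift funpow_Suc_right del: funpow.simps)
qed

lemma excursion_of_walk_sum:
  assumes "0 < n" "(F ^^ n) s = t" "walk_sum F (of_bool \<circ> V) s n = of_bool (V s)"
  shows "excursion F (of_bool \<circ> V) V s t (of_bool (V s))"
proof -
  obtain n' where n': "n = Suc n'"
    using assms(1) gr0_implies_Suc by blast
  then have "walk_sum F (of_bool \<circ> V) (F s) n' = 0"
    using assms(3) by (simp add: walk_sum_Suc_shift)
  then have "\<not> V ((F ^^ Suc i) s)" if "i < n'" for i
    using that by (simp add: walk_sum_eq_0_iff funpow_Suc_right del: funpow.simps)
  then have "\<not> V ((F ^^ i) s)" if "0 < i" "i < n" for i
    using that n' by (metis Suc_less_SucD gr0_implies_Suc)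
  then show ?thesis
    unfolding excursion_def using assms by blast
qed

text \<open>\<open>induces F w V G v\<close>: \<open>G\<close> is the first-return map of \<open>F\<close> to \<open>V\<close>, and \<open>v s\<close> is the
  \<open>w\<close>-weight that \<open>F\<close> collects on its way from \<open>s\<close> to \<open>G s\<close>.\<close>
definition induces :: "('s \<Rightarrow> 's) \<Rightarrow> ('s \<Rightarrow> nat) \<Rightarrow> ('s \<Rightarrow> bool) \<Rightarrow> ('s \<Rightarrow> 's) \<Rightarrow> ('s \<Rightarrow> nat) \<Rightarrow> bool"
  where "induces F w V G v \<longleftrightarrow> (\<forall>s. V s \<longrightarrow> V (G s) \<and> excursion F w V s (G s) (v s))"

definition return_time :: "('s \<Rightarrow> 's) \<Rightarrow> ('s \<Rightarrow> bool) \<Rightarrow> 's \<Rightarrow> nat" where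
  "return_time F V s = (LEAST n. 0 < n \<and> V ((F ^^ n) s))"

definition induced_time :: "('s \<Rightarrow> 's) \<Rightarrow> ('s \<Rightarrow> bool) \<Rightarrow> ('s \<Rightarrow> 's) \<Rightarrow> 's \<Rightarrow> nat \<Rightarrow> nat" where
  "induced_time F V G s j = (\<Sum>i<j. return_time F V ((G ^^ i) s))"

context
  fixes F :: "'s \<Rightarrow> 's" and w and V and G and v
  assumes induces: "induces F w V G v"
begin

lemma induces_closed: "V s \<Longrightarrow> V ((G ^^ j) s)"
  using induces by (induction j) (auto simp: induces_def)

lemma return_time:
  assumes "V s"
  shows "0 < return_time F V s" "(F ^^ return_time F V s) s = G s"
    "\<And>i. 0 < i \<Longrightarrow> i < return_time F V s \<Longrightarrow> \<not> V ((F ^^ i) s)"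
    "walk_sum F w s (return_time F V s) = v s"
proof -
  obtain n where n: "0 < n" "(F ^^ n) s = G s" "\<forall>i. 0 < i \<and> i < n \<longrightarrow> \<not> V ((F ^^ i) s)"
    "walk_sum F w s n = v s" "V (G s)"
    using induces assms by (auto simp: induces_def excursion_def)
  have "return_time F V s = n"
    unfolding return_time_def by (rule Least_equality) (use n in \<open>auto simp: not_le\<close>)
  then show "0 < return_time F V s" "(F ^^ return_time F V s) s = G s"
    "\<And>i. 0 < i \<Longrightarrow> i < return_time F V s \<Longrightarrow> \<not> V ((F ^^ i) s)"
    "walk_sum F w s (return_time F V s) = v s"
    using n by auto
qed

lemma induced_time:
  assumes "V s"
  shows "(F ^^ induced_time F V G s j) s = (G ^^ j) s \<and>
    walk_sum F w s (induced_time F V G s j) = walk_sum G v s j"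
proof (induction j)
  case (Suc j)
  have "induced_time F V G s (Suc j) = induced_time F V G s j + return_time F V ((G ^^ j) s)"
    by (simp add: induced_time_def)
  then show ?case
    using Suc return_time[OF induces_closed[OF assms, of j]]
    by (simp add: funpow_add_apply walk_sum_add walk_sum_Suc)
qed (simp add: induced_time_def)

lemma induced_orbit_subset:
  assumes "V s"
  shows "range (\<lambda>j. (G ^^ j) s) \<subseteq> range (\<lambda>t. (F ^^ t) s)"
proof (rule image_subsetI)
  fix j
  show "(G ^^ j) s \<in> range (\<lambda>t. (F ^^ t) s)"
    using induced_time[OF assms, of j] by (intro range_eqI[of _ _ "induced_time F V G s j"]) simp
qed

lemma strict_mono_induced_time: "V s \<Longrightarrow> strict_mono (induced_time F V G s)"
  unfolding strict_mono_Suc_iff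
  using return_time(1)[OF induces_closed] by (simp add: induced_time_def)

lemma induced_time_0 [simp]: "induced_time F V G s 0 = 0"
  by (simp add: induced_time_def)

lemma induced_time_Suc_shift:
  "induced_time F V G s (Suc j) = return_time F V s + induced_time F V G (G s) j"
  unfolding induced_time_def sum.lessThan_Suc_shift by (simp add: funpow_Suc_right del: funpow.simps)

lemma visit_at_induced_time:
  assumes "V s" "V ((F ^^ t) s)"
  shows "\<exists>j. t = induced_time F V G s j"
  using assms
proof (induction t arbitrary: s rule: less_induct)
  case (less t)
  show ?case
  proof (cases "t = 0")
    case True
    then show ?thesis by (intro exI[of _ 0]) simp
  next
    case False
    define r where "r = return_time F V s"
    note r = return_time[OF less.prems(1), folded r_def]
    have "r \<le> t"
      using r(3)[of t] less.prems(2) False by (meson not_le neq0_conv)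
    then have "(F ^^ t) s = (F ^^ (t - r)) (G s)"
      using funpow_add_apply[of r "t - r" F s] r(2) by simp
    moreover have "V (G s)"
      using induces less.prems(1) by (simp add: induces_def)
    moreover have "t - r < t"
      using r(1) False by simp
    ultimately obtain j where "t - r = induced_time F V G (G s) j"
      using less.IH[of "t - r" "G s"] less.prems(2) by auto
    then show ?thesis
      using \<open>r \<le> t\<close> by (intro exI[of _ "Suc j"]) (simp add: induced_time_Suc_shift r_def)
  qed
qed

lemma induced_time_less_iff: "V s \<Longrightarrow> induced_time F V G s i < induced_time F V G s j \<longleftrightarrow> i < j"
  using strict_mono_less[OF strict_mono_induced_time] .

lemma induced_time_pos_iff: "V s \<Longrightarrow> 0 < induced_time F V G s j \<longleftrightarrow> 0 < j"
  using induced_time_less_iff[of s 0 j] by simp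

lemma induces_trans:
  assumes GH: "induces G v W H u" and WV: "\<And>s. W s \<Longrightarrow> V s"
  shows "induces F w W H u"
  unfolding induces_def
proof (intro allI impI conjI)
  fix s assume s: "W s"
  then show "W (H s)"
    using GH by (simp add: induces_def)
  obtain j where j: "0 < j" "(G ^^ j) s = H s" "\<forall>i. 0 < i \<and> i < j \<longrightarrow> \<not> W ((G ^^ i) s)"
    "walk_sum G v s j = u s"
    using GH s by (auto simp: induces_def excursion_def)
  let ?T = "induced_time F V G s"
  show "excursion F w W s (H s) (u s)"
    unfolding excursion_def
  proof (intro exI conjI allI impI)
    fix i assume i: "0 < i \<and> i < ?T j"
    show "\<not> W ((F ^^ i) s)"
    proof
      assume Wi: "W ((F ^^ i) s)"
      then obtain k where k: "i = ?T k"
        using visit_at_induced_time[OF WV[OF s] WV] by blast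
      then have "0 < k" "k < j"
        using i induced_time_pos_iff[OF WV[OF s]] induced_time_less_iff[OF WV[OF s]] by auto
      then show False
        using j(3) Wi k induced_time[OF WV[OF s], of k] by auto
    qed
  qed (use j induced_time[OF WV[OF s]] induced_time_pos_iff[OF WV[OF s]] in auto)
qed

lemma induces_inj_on:
  assumes inj: "inj_on F U" and U: "F ` U \<subseteq> U" "Collect V \<subseteq> U"
  shows "inj_on G (Collect V)"
proof -
  have "s1 = s2" if s: "V s1" "V s2" "G s1 = G s2" "return_time F V s1 \<le> return_time F V s2"
    for s1 s2
  proof -
    define n1 n2 where "n1 = return_time F V s1" and "n2 = return_time F V s2"
    have "(F ^^ n1) s1 = (F ^^ n1) ((F ^^ (n2 - n1)) s2)"
      using return_time(2)[OF s(1)] return_time(2)[OF s(2)] s(3,4)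
        funpow_add_apply[of "n2 - n1" n1 F s2] by (simp add: n1_def n2_def)
    moreover have "(F ^^ k) s \<in> U" if "s \<in> U" for k s
      using that U(1) by (induction k) auto
    ultimately have eq: "s1 = (F ^^ (n2 - n1)) s2"
      using inj_on_funpow[OF inj U(1), of n1] U(2) s(1,2) by (auto dest: inj_onD)
    show "s1 = s2"
    proof (cases "n1 = n2")
      case False
      then have "0 < n2 - n1" "n2 - n1 < n2"
        using return_time(1)[OF s(1)] s(4) by (auto simp: n1_def n2_def)
      then show ?thesis
        using return_time(3)[OF s(2)] eq s(1) by (auto simp: n2_def)
    qed (use eq in simp)
  qed
  then show ?thesis
    by (intro inj_onI) (metis mem_Collect_eq nat_le_linear)
qed

lemma least_period_induced_time_iff:
  assumes s: "V s"
  shows "least_period F s (induced_time F V G s k) \<longleftrightarrow> least_period G s k"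
proof -
  let ?T = "induced_time F V G s"
  have "(\<exists>d. 0 < d \<and> d < ?T k \<and> (F ^^ d) s = s) \<longleftrightarrow> (\<exists>j. 0 < j \<and> j < k \<and> (G ^^ j) s = s)"
  proof
    assume "\<exists>d. 0 < d \<and> d < ?T k \<and> (F ^^ d) s = s"
    then obtain d where d: "0 < d" "d < ?T k" "(F ^^ d) s = s" by blast
    then obtain j where "d = ?T j"
      using visit_at_induced_time[OF s, of d] s by auto
    then show "\<exists>j. 0 < j \<and> j < k \<and> (G ^^ j) s = s"
      using d induced_time[OF s, of j] induced_time_less_iff[OF s] induced_time_pos_iff[OF s] by auto
  next
    assume "\<exists>j. 0 < j \<and> j < k \<and> (G ^^ j) s = s"
    then obtain j where "0 < j" "j < k" "(G ^^ j) s = s" by blast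
    then show "\<exists>d. 0 < d \<and> d < ?T k \<and> (F ^^ d) s = s"
      using induced_time[OF s, of j] induced_time_less_iff[OF s] induced_time_pos_iff[OF s]
      by (intro exI[of _ "?T j"]) auto
  qed
  then show ?thesis
    unfolding least_period_def induced_time[OF s, THEN conjunct1] induced_time_pos_iff[OF s] by blast
qed

lemma induces_cycle_weight_iff:
  assumes s: "V s"
  shows "cycle_weight F w s l \<longleftrightarrow> cycle_weight G v s l"
proof
  assume "cycle_weight F w s l"
  then obtain n where n: "least_period F s n" "walk_sum F w s n = l"
    by (auto simp: cycle_weight_def)
  moreover obtain k where "n = induced_time F V G s k"
    using visit_at_induced_time[OF s, of n] n(1) s by (auto simp: least_period_def)
  ultimately show "cycle_weight G v s l"
    unfolding cycle_weight_def using least_period_induced_time_iff[OF s] induced_time[OF s] by auto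
next
  assume "cycle_weight G v s l"
  then obtain k where "least_period G s k" "walk_sum G v s k = l"
    by (auto simp: cycle_weight_def)
  then show "cycle_weight F w s l"
    unfolding cycle_weight_def using least_period_induced_time_iff[OF s] induced_time[OF s, of k] by auto
qed

end

section \<open>Token dynamics of strand diagrams\<close>

type_synonym token = "oport \<times> (nat \<Rightarrow> bool)"

definition token_step :: "sdiag \<Rightarrow> token \<Rightarrow> token" where
  "token_step D st = (case stg D (fst st) of
      SIn u \<Rightarrow> (SOut u (snd st 0), \<lambda>k. snd st (Suc k))
    | MIn w b \<Rightarrow> (MOut w, prepend [b] (snd st)))"

lemma token_step_SIn: "stg D p = SIn u \<Longrightarrow> token_step D (p, x) = (SOut u (x 0), \<lambda>k. x (Suc k))"
  by (simp add: token_step_def)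

lemma token_step_MIn: "stg D p = MIn w b \<Longrightarrow> token_step D (p, x) = (MOut w, prepend [b] x)"
  by (simp add: token_step_def)

lemma token_step_SIn_prepend:
  "stg D p = SIn u \<Longrightarrow> token_step D (p, prepend [b] x) = (SOut u b, x)"
  by (simp add: token_step_def)

lemma token_step_cong: "stg D p = stg D' q \<Longrightarrow> token_step D (p, x) = token_step D' (q, x)"
  by (simp add: token_step_def split: iport.split)

lemma osrc_token_step: "osrc (fst (token_step D st)) = idst (stg D (fst st))"
  by (cases "stg D (fst st)") (auto simp: token_step_def)

definition vtxs :: "sdiag \<Rightarrow> vtx set" where
  "vtxs D = SV ` sS D \<union> MV ` sM D"

lemma osrc_in_vtxs_iff: "osrc p \<in> vtxs D \<longleftrightarrow> p \<in> oports D"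
  by (cases p) (auto simp: vtxs_def oports_def)

definition on_edges :: "sdiag \<Rightarrow> token \<Rightarrow> bool" where
  "on_edges D st \<longleftrightarrow> fst st \<in> oports D"

definition well_formed :: "sdiag \<Rightarrow> bool" where
  "well_formed D \<longleftrightarrow> (\<forall>p\<in>oports D. idst (stg D p) \<in> vtxs D) \<and> inj_on (stg D) (oports D) \<and>
     finite (sS D) \<and> finite (sM D) \<and> card (sS D) = card (sM D)"

lemma on_edges_token_step:
  "\<forall>p\<in>oports D. idst (stg D p) \<in> vtxs D \<Longrightarrow> on_edges D st \<Longrightarrow> on_edges D (token_step D st)"
  using osrc_token_step[of D st] osrc_in_vtxs_iff by (metis on_edges_def)

lemma inj_on_token_step_iff:
  "inj_on (token_step D) (Collect (on_edges D)) \<longleftrightarrow> inj_on (stg D) (oports D)"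
proof
  assume inj: "inj_on (token_step D) (Collect (on_edges D))"
  show "inj_on (stg D) (oports D)"
  proof (rule inj_onI)
    fix p q assume "p \<in> oports D" "q \<in> oports D" "stg D p = stg D q"
    then show "p = q"
      using inj_onD[OF inj, of "(p, undefined)" "(q, undefined)"] token_step_cong[of D p D q]
      by (simp add: on_edges_def)
  qed
next
  assume inj: "inj_on (stg D) (oports D)"
  show "inj_on (token_step D) (Collect (on_edges D))"
  proof (rule inj_onI)
    fix st st' assume st: "st \<in> Collect (on_edges D)" "st' \<in> Collect (on_edges D)"
      and eq: "token_step D st = token_step D st'"
    obtain p x p' x' where [simp]: "st = (p, x)" "st' = (p', x')"
      by fastforce
    have "stg D p = stg D p' \<and> x = x'"
    proof (cases "stg D p"; cases "stg D p'")
      fix u u' assume "stg D p = SIn u" "stg D p' = SIn u'"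
      then have "u = u'" "x 0 = x' 0" "\<And>k. x (Suc k) = x' (Suc k)"
        using eq by (auto simp: token_step_def fun_eq_iff)
      moreover have "x = x'"
      proof
        fix k show "x k = x' k" using calculation by (cases k) auto
      qed
      ultimately show ?thesis
        using \<open>stg D p = SIn u\<close> \<open>stg D p' = SIn u'\<close> by simp
    next
      fix w b w' b' assume "stg D p = MIn w b" "stg D p' = MIn w' b'"
      then show ?thesis
        using eq prepend_leaf_inj[of "[b]" "Node Leaf Leaf" "[b']" x x']
        by (cases b; cases b') (auto simp: token_step_def)
    qed (use eq in \<open>auto simp: token_step_def\<close>)
    then show "st = st'"
      using inj st by (auto simp: on_edges_def dest: inj_onD)
  qed
qed

section \<open>Labelled Rule I\<close>

lemma rule1_apply_simps:
  "sS (rule1_apply D m s) = sS D - {s}" "sM (rule1_apply D m s) = sM D - {m}"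
  "stg (rule1_apply D m s) p = fst (chase 3 (stg D) (slb D) m s p)"
  "slb (rule1_apply D m s) p = snd (chase 3 (stg D) (slb D) m s p)"
  "sloops (rule1_apply D m s) = sloops D + new_loops D m s"
  by (simp_all add: rule1_apply_def)

lemma oports_rule1_apply:
  "oports (rule1_apply D m s) = oports D - {SOut s False, SOut s True, MOut m}"
  by (auto simp: oports_def rule1_apply_simps)

lemma vtxs_rule1_apply: "vtxs (rule1_apply D m s) = vtxs D - {SV s, MV m}"
  by (auto simp: vtxs_def rule1_apply_simps)

lemma chase_Suc_not_into: "\<forall>c. t p \<noteq> MIn m c \<Longrightarrow> chase (Suc k) t l m s p = (t p, l p)"
  by (cases "t p") auto

lemma chase_Suc_into:
  "t p = MIn m b \<Longrightarrow>
   chase (Suc k) t l m s p = (fst (chase k t l m s (SOut s b)), l p + l (MOut m) + snd (chase k t l m s (SOut s b)))"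
  by (simp add: Let_def)

context
  fixes D m s
  assumes wf: "well_formed D" and m: "m \<in> sM D" and s: "s \<in> sS D" and ms: "stg D (MOut m) = SIn s"
begin

lemma SOut_in_oports: "SOut s c \<in> oports D"
  using s by (simp add: oports_def)

lemma stg_eq_imp_eq: "p \<in> oports D \<Longrightarrow> q \<in> oports D \<Longrightarrow> stg D p = stg D q \<Longrightarrow> p = q"
  using wf by (auto simp: well_formed_def dest: inj_onD)

lemma sibling_not_into:
  assumes "stg D (SOut s b) = MIn m (\<not> b)" "stg D (SOut s (\<not> b)) \<noteq> MIn m b"
  shows "\<forall>c. stg D (SOut s (\<not> b)) \<noteq> MIn m c"
proof -
  have "stg D (SOut s (\<not> b)) \<noteq> stg D (SOut s b)"
    using stg_eq_imp_eq[OF SOut_in_oports SOut_in_oports] by (metis (full_types) oport.inject(1))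
  then show ?thesis
    using assms by (metis (full_types) iport.inject(2))
qed

text \<open>The strand through \<open>p\<close> enters \<open>m\<close> at most twice before leaving the deleted pair;
  injectivity of \<open>stg D\<close> rules out everything else.\<close>
lemma rule1_apply_cases:
  assumes p: "p \<in> oports (rule1_apply D m s)"
  obtains (direct) "\<forall>c. stg D p \<noteq> MIn m c" "stg (rule1_apply D m s) p = stg D p"
      "slb (rule1_apply D m s) p = slb D p"
  | (once) b where "stg D p = MIn m b" "\<forall>c. stg D (SOut s b) \<noteq> MIn m c"
      "stg (rule1_apply D m s) p = stg D (SOut s b)"
      "slb (rule1_apply D m s) p = slb D p + slb D (MOut m) + slb D (SOut s b)"
  | (twice) b where "stg D p = MIn m b" "stg D (SOut s b) = MIn m (\<not> b)"
      "\<forall>c. stg D (SOut s (\<not> b)) \<noteq> MIn m c" "stg (rule1_apply D m s) p = stg D (SOut s (\<not> b))"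
      "slb (rule1_apply D m s) p =
         slb D p + slb D (MOut m) + (slb D (SOut s b) + slb D (MOut m) + slb D (SOut s (\<not> b)))"
proof -
  have pD: "p \<in> oports D" "p \<noteq> SOut s c" "p \<noteq> MOut m" for c
    using p by (auto simp: oports_rule1_apply)
  have three: "(3::nat) = Suc (Suc (Suc 0))" by simp
  show ?thesis
  proof (cases "\<exists>b. stg D p = MIn m b")
    case False
    then show ?thesis
      using direct by (simp add: rule1_apply_simps three chase_Suc_not_into del: chase.simps)
  next
    case True
    then obtain b where b: "stg D p = MIn m b" by blast
    have "stg D (SOut s b) \<noteq> MIn m b"
      using stg_eq_imp_eq[OF pD(1) SOut_in_oports] b pD(2) by metis
    then have "stg D (SOut s b) = MIn m c \<Longrightarrow> c = (\<not> b)" for c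
      by (cases c; cases b) auto
    then consider "\<forall>c. stg D (SOut s b) \<noteq> MIn m c" | "stg D (SOut s b) = MIn m (\<not> b)"
      by blast
    then show ?thesis
    proof cases
      case 1
      then show ?thesis
        using once[OF b] b
        by (simp add: rule1_apply_simps three chase_Suc_into chase_Suc_not_into del: chase.simps)
    next
      case 2
      have "stg D (SOut s (\<not> b)) \<noteq> stg D p"
        using stg_eq_imp_eq[OF SOut_in_oports pD(1)] pD(2) by metis
      then have "\<forall>c. stg D (SOut s (\<not> b)) \<noteq> MIn m c"
        using sibling_not_into[OF 2] b by simp
      then show ?thesis
        using twice[OF b 2] b 2
        by (simp add: rule1_apply_simps three chase_Suc_into chase_Suc_not_into del: chase.simps)
    qed
  qed
qed

lemma exit_in_vtxs:
  assumes "q \<in> oports D" "q \<noteq> MOut m" "\<forall>c. stg D q \<noteq> MIn m c"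
  shows "idst (stg D q) \<in> vtxs (rule1_apply D m s)"
proof -
  have "stg D q \<noteq> SIn s"
    using stg_eq_imp_eq[OF assms(1), of "MOut m"] ms m assms(2) by (auto simp: oports_def)
  then have "idst (stg D q) \<noteq> SV s" "idst (stg D q) \<noteq> MV m"
    using assms(3) by (cases "stg D q"; auto)+
  moreover have "idst (stg D q) \<in> vtxs D"
    using wf assms(1) by (simp add: well_formed_def)
  ultimately show ?thesis
    by (simp add: vtxs_rule1_apply)
qed

lemma rule1_apply_targets:
  assumes p: "p \<in> oports (rule1_apply D m s)"
  shows "idst (stg (rule1_apply D m s) p) \<in> vtxs (rule1_apply D m s)"
  using p
proof (cases rule: rule1_apply_cases)
  case direct
  then show ?thesis
    using p exit_in_vtxs[of p] by (simp add: oports_rule1_apply)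
qed (simp_all add: exit_in_vtxs SOut_in_oports)

lemma token_step_through_pair: "token_step D (MOut m, prepend [b] x) = (SOut s b, x)"
  using ms by (rule token_step_SIn_prepend)

lemma rule1_apply_excursion:
  assumes p: "p \<in> oports (rule1_apply D m s)"
  shows "excursion (token_step D) (slb D \<circ> fst) (on_edges (rule1_apply D m s))
    (p, x) (token_step (rule1_apply D m s) (p, x)) (slb (rule1_apply D m s) p)"
proof -
  let ?V = "on_edges (rule1_apply D m s)" and ?w = "slb D \<circ> fst"
  have off: "\<not> ?V (MOut m, y)" "\<not> ?V (SOut s c, y)" for y c
    by (auto simp: on_edges_def oports_rule1_apply)
  have exit: "excursion (token_step D) ?w ?V (q, y) (token_step (rule1_apply D m s) (p, y)) (slb D q)"
    if "stg (rule1_apply D m s) p = stg D q" for q y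
    using excursion_step[of "token_step D" ?w ?V "(q, y)"] token_step_cong[OF that] by simp
  have enter: "excursion (token_step D) ?w ?V (q, y) t (slb D q + slb D (MOut m) + l)"
    if "stg D q = MIn m b" "excursion (token_step D) ?w ?V (SOut s b, y) t l" for q y b t l
  proof -
    have "excursion (token_step D) ?w ?V (MOut m, prepend [b] y) t (slb D (MOut m) + l)"
      using excursion_Cons[of ?V "token_step D" "(MOut m, prepend [b] y)" ?w] that(2) off
      by (simp add: token_step_through_pair)
    then show ?thesis
      using excursion_Cons[of ?V "token_step D" "(q, y)" ?w] that(1) off
      by (simp add: token_step_MIn add.assoc)
  qed
  from p show ?thesis
  proof (cases rule: rule1_apply_cases)
    case direct
    then show ?thesis
      using exit by simp
  next
    case (once b)
    then show ?thesis
      using enter exit[of "SOut s b" x] by simp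
  next
    case (twice b)
    then show ?thesis
      using enter[OF twice(1) enter[OF twice(2) exit[of "SOut s (\<not> b)" x]]] by simp
  qed
qed

lemma induces_rule1_apply:
  "induces (token_step D) (slb D \<circ> fst) (on_edges (rule1_apply D m s))
     (token_step (rule1_apply D m s)) (slb (rule1_apply D m s) \<circ> fst)"
  unfolding induces_def
  using on_edges_token_step[of "rule1_apply D m s"] rule1_apply_targets rule1_apply_excursion
  by (auto simp: on_edges_def)

lemma well_formed_rule1_apply: "well_formed (rule1_apply D m s)"
proof -
  have "inj_on (token_step D) (Collect (on_edges D))"
    using wf inj_on_token_step_iff by (auto simp: well_formed_def)
  moreover have "token_step D ` Collect (on_edges D) \<subseteq> Collect (on_edges D)"
    using wf on_edges_token_step by (auto simp: well_formed_def)
  moreover have "Collect (on_edges (rule1_apply D m s)) \<subseteq> Collect (on_edges D)"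
    by (auto simp: on_edges_def oports_rule1_apply)
  ultimately have "inj_on (token_step (rule1_apply D m s)) (Collect (on_edges (rule1_apply D m s)))"
    by (rule induces_inj_on[OF induces_rule1_apply])
  moreover have "card (sS D - {s}) = card (sM D - {m})"
    using wf s m by (simp add: well_formed_def)
  ultimately show ?thesis
    using wf rule1_apply_targets inj_on_token_step_iff
    by (auto simp: well_formed_def rule1_apply_simps)
qed

lemma exit_on_edges:
  "q \<in> oports D \<Longrightarrow> q \<noteq> MOut m \<Longrightarrow> \<forall>c. stg D q \<noteq> MIn m c \<Longrightarrow>
   on_edges (rule1_apply D m s) (token_step D (q, y))"
  using exit_in_vtxs osrc_token_step[of D "(q, y)"] osrc_in_vtxs_iff by (metis fst_conv on_edges_def)

lemma loop_cycle_weight_2: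
  assumes "stg D (SOut s b) = MIn m b"
  shows "cycle_weight (token_step D) (slb D \<circ> fst) (SOut s b, x) (slb D (SOut s b) + slb D (MOut m))"
proof -
  have "least_period (token_step D) (SOut s b, x) 2"
    by (auto simp: least_period_def numeral_2_eq_2 less_Suc_eq token_step_MIn[OF assms]
        token_step_through_pair)
  moreover have "walk_sum (token_step D) (slb D \<circ> fst) (SOut s b, x) 2 = slb D (SOut s b) + slb D (MOut m)"
    by (simp add: walk_sum_def numeral_2_eq_2 token_step_MIn[OF assms])
  ultimately show ?thesis
    by (auto simp: cycle_weight_def)
qed

lemma loop_cycle_weight_4:
  assumes "stg D (SOut s b) = MIn m (\<not> b)" "stg D (SOut s (\<not> b)) = MIn m b"
  shows "cycle_weight (token_step D) (slb D \<circ> fst) (SOut s b, x)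
    (slb D (SOut s False) + slb D (SOut s True) + 2 * slb D (MOut m))"
proof -
  have four: "(4::nat) = Suc (Suc (Suc (Suc 0)))" by simp
  have "least_period (token_step D) (SOut s b, x) 4"
    by (auto simp: least_period_def four less_Suc_eq token_step_MIn[OF assms(1)]
        token_step_MIn[OF assms(2)] token_step_through_pair)
  moreover have "walk_sum (token_step D) (slb D \<circ> fst) (SOut s b, x) 4 =
      slb D (SOut s b) + slb D (SOut s (\<not> b)) + 2 * slb D (MOut m)"
    by (simp add: walk_sum_def four token_step_MIn[OF assms(1)] token_step_MIn[OF assms(2)]
        token_step_through_pair)
  moreover have "slb D (SOut s b) + slb D (SOut s (\<not> b)) = slb D (SOut s False) + slb D (SOut s True)"
    by (cases b) simp_all
  ultimately show ?thesis
    by (auto simp: cycle_weight_def)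
qed

lemma new_loop_cycle_weight:
  assumes "l \<in># new_loops D m s"
  shows "\<exists>b. cycle_weight (token_step D) (slb D \<circ> fst) (SOut s b, x) l"
  using assms loop_cycle_weight_2 loop_cycle_weight_4[of False]
  by (auto simp: new_loops_def Let_def split: if_splits)

lemma new_loops_memI:
  "stg D (SOut s b) = MIn m b \<Longrightarrow> slb D (SOut s b) + slb D (MOut m) \<in># new_loops D m s"
  "stg D (SOut s b) = MIn m (\<not> b) \<Longrightarrow> stg D (SOut s (\<not> b)) = MIn m b \<Longrightarrow>
     slb D (SOut s False) + slb D (SOut s True) + 2 * slb D (MOut m) \<in># new_loops D m s"
  by (cases b; simp add: new_loops_def Let_def)+

lemma escape_from_SOut:
  "\<exists>k. on_edges (rule1_apply D m s) ((token_step D ^^ k) (SOut s b, x)) \<or>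
     (\<exists>l\<in>#new_loops D m s. cycle_weight (token_step D) (slb D \<circ> fst) ((token_step D ^^ k) (SOut s b, x)) l)"
proof -
  have "(\<forall>c. stg D (SOut s b) \<noteq> MIn m c) \<or> stg D (SOut s b) = MIn m b \<or>
      stg D (SOut s b) = MIn m (\<not> b)"
    by (cases "stg D (SOut s b)") auto
  then consider (exit) "\<forall>c. stg D (SOut s b) \<noteq> MIn m c" | (loop2) "stg D (SOut s b) = MIn m b"
    | (loop4) "stg D (SOut s b) = MIn m (\<not> b)" "stg D (SOut s (\<not> b)) = MIn m b"
    | (exit3) "stg D (SOut s b) = MIn m (\<not> b)" "\<forall>c. stg D (SOut s (\<not> b)) \<noteq> MIn m c"
    using sibling_not_into by blast
  then show ?thesis
  proof cases
    case exit
    then have "on_edges (rule1_apply D m s) ((token_step D ^^ 1) (SOut s b, x))"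
      using exit_on_edges[OF SOut_in_oports] by simp
    then show ?thesis by blast
  next
    case loop2
    then show ?thesis
      using loop_cycle_weight_2 new_loops_memI(1) by (metis funpow_0)
  next
    case loop4
    then show ?thesis
      using loop_cycle_weight_4 new_loops_memI(2) by (metis funpow_0)
  next
    case exit3
    then have "on_edges (rule1_apply D m s) ((token_step D ^^ 3) (SOut s b, x))"
      using exit_on_edges[OF SOut_in_oports]
      by (simp add: numeral_3_eq_3 token_step_MIn[OF exit3(1)] token_step_through_pair)
    then show ?thesis by blast
  qed
qed

lemma rule1_apply_escape:
  assumes "on_edges D st"
  shows "\<exists>k. on_edges (rule1_apply D m s) ((token_step D ^^ k) st) \<or>
    (\<exists>l\<in>#new_loops D m s. cycle_weight (token_step D) (slb D \<circ> fst) ((token_step D ^^ k) st) l)"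
proof -
  obtain p x where st: "st = (p, x)" by fastforce
  consider "p \<in> oports (rule1_apply D m s)" | b where "p = SOut s b" | "p = MOut m"
    using assms st by (auto simp: on_edges_def oports_rule1_apply)
  then show ?thesis
  proof cases
    case 1
    then show ?thesis
      using st by (intro exI[of _ 0]) (simp add: on_edges_def)
  next
    case 2
    then show ?thesis
      using st escape_from_SOut by blast
  next
    case 3
    then have "(token_step D ^^ Suc k) st = (token_step D ^^ k) (SOut s (x 0), \<lambda>k. x (Suc k))" for k
      using st ms by (simp add: funpow_Suc_right token_step_SIn del: funpow.simps)
    then show ?thesis
      using escape_from_SOut by metis
  qed
qed

end

section \<open>Reduced diagrams and merge cycles\<close>

lemma reduced_merge_successor:
  assumes "well_formed D" "reduced D" "w \<in> sM D"
  shows "\<exists>w' b. stg D (MOut w) = MIn w' b \<and> w' \<in> sM D"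
proof -
  have "idst (stg D (MOut w)) \<in> vtxs D"
    using assms(1,3) by (simp add: well_formed_def oports_def)
  moreover have "\<forall>u\<in>sS D. stg D (MOut w) \<noteq> SIn u"
    using assms(2,3) by (auto simp: reduced_def)
  ultimately show ?thesis
    by (cases "stg D (MOut w)") (auto simp: vtxs_def)
qed

lemma reduced_has_merge_cycle:
  assumes wf: "well_formed D" and red: "reduced D" and ne: "sS D \<union> sM D \<noteq> {}"
  shows "\<exists>es. merge_cycle D es"
proof -
  have fin: "finite (sM D)" and "card (sS D) = card (sM D)" "finite (sS D)"
    using wf by (auto simp: well_formed_def)
  then obtain a where a: "a \<in> sM D"
    using ne by (metis Un_empty card_0_eq ex_in_conv)
  define nx where "nx w = (SOME w'. \<exists>b. stg D (MOut w) = MIn w' b \<and> w' \<in> sM D)" for w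
  have nx: "\<exists>b. stg D (MOut w) = MIn (nx w) b" "nx w \<in> sM D" if "w \<in> sM D" for w
    using someI_ex[OF reduced_merge_successor[OF wf red that]] by (auto simp: nx_def)
  obtain w k where w: "w \<in> sM D" and k: "least_period nx w k"
    using finite_invariant_set_has_periodic_point[OF fin _ a, of nx] nx(2) by blast
  have orbit: "(nx ^^ i) w \<in> sM D" for i
    using w nx(2) by (induction i) auto
  have k_pos: "0 < k" and k_ret: "(nx ^^ k) w = w"
    using k by (auto simp: least_period_def)
  define es where "es = map (\<lambda>i. MOut ((nx ^^ i) w)) [0..<k]"
  have "is_cycle D es"
    unfolding is_cycle_def
  proof (intro conjI allI impI)
    show "es \<noteq> []" "set es \<subseteq> oports D"
      using k_pos orbit by (auto simp: es_def oports_def)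
    show "distinct (map osrc es)"
      using least_period_inj_on[OF k] by (simp add: es_def distinct_map inj_on_def atLeast0LessThan)
    fix i assume i: "i < length es"
    have "(nx ^^ Suc i) w = (nx ^^ (Suc i mod k)) w"
      using funpow_mod_eq[OF k_ret] by simp
    then show "idst (stg D (es ! i)) = osrc (es ! ((i + 1) mod length es))"
      using nx(1)[OF orbit[of i]] i k_pos by (auto simp: es_def)
  qed
  then have "merge_cycle D es"
    by (auto simp: merge_cycle_def es_def)
  then show ?thesis ..
qed

lemma merge_cycle_nth:
  assumes "merge_cycle D es" "i < length es"
  obtains w where "es ! i = MOut w"
proof -
  have "es ! i \<in> set es"
    using assms(2) by (rule nth_mem)
  then obtain w where "osrc (es ! i) = MV w"
    using assms(1) unfolding merge_cycle_def by blast
  then show ?thesis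
    using that by (cases "es ! i") auto
qed

lemma merge_cycle_start: "merge_cycle D es \<Longrightarrow> es ! 0 \<in> oports D"
  using nth_mem[of 0 es] by (auto simp: merge_cycle_def is_cycle_def)

lemma merge_cycle_token_steps:
  assumes "merge_cycle D es"
  shows "\<exists>c. length c = j \<and> (\<forall>x. (token_step D ^^ j) (es ! 0, x) = (es ! (j mod length es), prepend c x))"
proof (induction j)
  case (Suc j)
  then obtain c where c: "length c = j" "\<And>x. (token_step D ^^ j) (es ! 0, x) = (es ! (j mod length es), prepend c x)"
    by blast
  have cyc: "is_cycle D es"
    using assms by (simp add: merge_cycle_def)
  then have i: "j mod length es < length es"
    by (simp add: is_cycle_def)
  then obtain w where w: "es ! (j mod length es) = MOut w"
    using merge_cycle_nth[OF assms] by blast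
  have "Suc j mod length es < length es"
    using i by (cases "length es") auto
  then obtain w' where w': "es ! (Suc j mod length es) = MOut w'"
    by (rule merge_cycle_nth[OF assms])
  have "idst (stg D (es ! (j mod length es))) = osrc (es ! (Suc (j mod length es) mod length es))"
    using cyc i by (simp add: is_cycle_def)
  then have "idst (stg D (MOut w)) = MV w'"
    using w w' by (simp add: mod_Suc_eq)
  then obtain b where "stg D (MOut w) = MIn w' b"
    by (cases "stg D (MOut w)") auto
  then have "(token_step D ^^ Suc j) (es ! 0, x) = (es ! (Suc j mod length es), prepend (b # c) x)" for x
    using c(2)[of x] w w' by (simp add: token_step_MIn prepend_append[symmetric])
  then show ?case
    using c(1) by (intro exI[of _ "b # c"]) simp
qed (intro exI[of _ "[]"], simp)

lemma merge_cycle_cycle_weight: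
  assumes mc: "merge_cycle D es"
  shows "\<exists>x. cycle_weight (token_step D) (slb D \<circ> fst) (es ! 0, x) (sum_list (map (slb D) es))"
proof -
  let ?F = "token_step D" and ?n = "length es"
  have cyc: "is_cycle D es"
    using mc by (simp add: merge_cycle_def)
  then have n: "0 < ?n" and dist: "distinct es"
    by (auto simp: is_cycle_def distinct_map)
  obtain c where c: "length c = ?n" "\<And>x. (?F ^^ ?n) (es ! 0, x) = (es ! 0, prepend c x)"
    using merge_cycle_token_steps[OF mc, of ?n] by auto
  define xp where "xp i = c ! (i mod ?n)" for i
  have "prepend c xp = xp"
    using c(1) n by (auto simp: fun_eq_iff prepend_def xp_def le_mod_geq)
  then have ret: "(?F ^^ ?n) (es ! 0, xp) = (es ! 0, xp)"
    using c(2) by simp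
  have at: "fst ((?F ^^ i) (es ! 0, xp)) = es ! i" if "i < ?n" for i
    using merge_cycle_token_steps[OF mc, of i] that by auto
  have "(?F ^^ i) (es ! 0, xp) \<noteq> (es ! 0, xp)" if "0 < i" "i < ?n" for i
  proof -
    have "es ! i \<noteq> es ! 0"
      using nth_eq_iff_index_eq[OF dist, of i 0] that n by simp
    then show ?thesis
      using at[OF that(2)] by auto
  qed
  then have "least_period ?F (es ! 0, xp) ?n"
    using n ret by (simp add: least_period_def)
  moreover have "walk_sum ?F (slb D \<circ> fst) (es ! 0, xp) ?n = sum_list (map (slb D) es)"
    using at by (simp add: walk_sum_def sum_list_sum_nth atLeast0LessThan)
  ultimately show ?thesis
    by (auto simp: cycle_weight_def)
qed

lemma merge_cycle_infinite_orbit: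
  assumes mc: "merge_cycle D es"
  shows "\<exists>x. infinite (range (\<lambda>j. (token_step D ^^ j) (es ! 0, x)))"
proof -
  let ?F = "token_step D" and ?n = "length es"
  have n: "0 < ?n"
    using mc by (simp add: merge_cycle_def is_cycle_def)
  obtain c where c: "length c = ?n" "\<And>x. (?F ^^ ?n) (es ! 0, x) = (es ! 0, prepend c x)"
    using merge_cycle_token_steps[OF mc, of ?n] by auto
  have c_ne: "c \<noteq> []"
    using c(1) n by auto
  have rounds: "(?F ^^ (r * ?n)) (es ! 0, x) = (es ! 0, prepend (concat (replicate r c)) x)" for r x
  proof (induction r)
    case (Suc r)
    have "(?F ^^ (Suc r * ?n)) (es ! 0, x) = (?F ^^ ?n) ((?F ^^ (r * ?n)) (es ! 0, x))"
      by (simp add: funpow_add_apply[symmetric] add.commute)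
    then show ?case
      using Suc c(2) by (simp add: prepend_append)
  qed simp
  obtain a c' where ac: "c = a # c'"
    using c_ne by (cases c) auto
  define x0 where "x0 = (\<lambda>_::nat. \<not> a)"
  have "inj (\<lambda>r. (?F ^^ (r * ?n)) (es ! 0, x0))"
    using inj_prepend_power[OF ac] unfolding rounds x0_def by (simp add: inj_def)
  then have "infinite (range (\<lambda>r. (?F ^^ (r * ?n)) (es ! 0, x0)))"
    using finite_imageD by blast
  moreover have "range (\<lambda>r. (?F ^^ (r * ?n)) (es ! 0, x0)) \<subseteq> range (\<lambda>j. (?F ^^ j) (es ! 0, x0))"
    by auto
  ultimately show ?thesis
    using finite_subset by blast
qed

section \<open>The diagram \<open>D\<^sub>0(g)\<close>\<close>

definition at_root :: "token \<Rightarrow> bool" where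
  "at_root st \<longleftrightarrow> fst st = MOut []"

abbreviation root_weight :: "token \<Rightarrow> nat" where
  "root_weight \<equiv> of_bool \<circ> at_root"

lemma at_root_root: "at_root (MOut [], y)"
  by (simp add: at_root_def)

lemma tp_up_eq_SIn_iff: "tp_up w = SIn u \<longleftrightarrow> w = [] \<and> u = []"
  by (auto simp: tp_up_def)

lemma tp_up_eq_MIn_iff: "tp_up v = MIn w c \<longleftrightarrow> v = w @ [c]"
  by (cases v rule: rev_cases) (auto simp: tp_up_def)

locale thompson_element =
  fixes Tm Tp :: tree and \<sigma> :: "nat \<Rightarrow> nat"
  assumes length_leaves: "length (leaves Tm) = length (leaves Tp)"
    and bij: "bij_betw \<sigma> {..<length (leaves Tm)} {..<length (leaves Tm)}"
    and Tm_not_Leaf: "Tm \<noteq> Leaf"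
begin

abbreviation "N \<equiv> length (leaves Tm)"
abbreviation "g \<equiv> velem Tm Tp \<sigma>"
abbreviation "D\<^sub>0 \<equiv> D0 Tm Tp \<sigma>"
abbreviation "F \<equiv> token_step D\<^sub>0"

lemma Tp_not_Leaf: "Tp \<noteq> Leaf"
  using length_leaves Tm_not_Leaf length_leaves_eq_1_iff by metis

lemma sigma_less: "i < N \<Longrightarrow> \<sigma> i < N"
  using bij bij_betwE by blast

lemma sigma_inj: "i < N \<Longrightarrow> j < N \<Longrightarrow> \<sigma> i = \<sigma> j \<Longrightarrow> i = j"
  using bij bij_betw_imp_inj_on inj_onD by (metis lessThan_iff)

lemma sigma_leaf: "i < N \<Longrightarrow> leaves Tp ! \<sigma> i \<in> set (leaves Tp) \<and> leaves Tp ! \<sigma> i \<noteq> []"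
  using sigma_less[of i] length_leaves Nil_notin_leaves[OF Tp_not_Leaf] by (metis nth_mem)

lemma sigma_leaf_inj: "i < N \<Longrightarrow> j < N \<Longrightarrow> leaves Tp ! \<sigma> i = leaves Tp ! \<sigma> j \<Longrightarrow> i = j"
  using sigma_less sigma_inj length_leaves nth_eq_iff_index_eq[OF distinct_leaves] by metis

lemma leaf_index: "i < N \<Longrightarrow> (THE j. j < N \<and> leaves Tm ! j = leaves Tm ! i) = i"
  using distinct_leaves[of Tm] by (auto simp: nth_eq_iff_index_eq)

definition leaf_image :: "bool list \<Rightarrow> bool list" where
  "leaf_image a = leaves Tp ! \<sigma> (THE i. i < N \<and> leaves Tm ! i = a)"

lemma leaf_image_nth: "i < N \<Longrightarrow> leaf_image (leaves Tm ! i) = leaves Tp ! \<sigma> i"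
  by (simp add: leaf_image_def leaf_index)

lemma leaf_image_in_leaves:
  "a \<in> set (leaves Tm) \<Longrightarrow> leaf_image a \<in> set (leaves Tp) \<and> leaf_image a \<noteq> []"
  using sigma_leaf leaf_image_nth by (auto simp: in_set_conv_nth)

lemma leaf_image_inj:
  "a \<in> set (leaves Tm) \<Longrightarrow> a' \<in> set (leaves Tm) \<Longrightarrow> leaf_image a = leaf_image a' \<Longrightarrow> a = a'"
  using sigma_leaf_inj leaf_image_nth by (auto simp: in_set_conv_nth) (metis sigma_leaf_inj)

lemma D0_simps:
  "sS D\<^sub>0 = inodes Tm" "sM D\<^sub>0 = inodes Tp" "sloops D\<^sub>0 = {#}"
  "slb D\<^sub>0 p = of_bool (p = MOut [])" "stg D\<^sub>0 (MOut w) = tp_up w"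
  using Tm_not_Leaf length_leaves_eq_1_iff[of Tm] by (auto simp: D0_def)

lemma stg_D0_SOut:
  "stg D\<^sub>0 (SOut u b) = (if u @ [b] \<in> inodes Tm then SIn (u @ [b]) else tp_up (leaf_image (u @ [b])))"
  by (simp add: D0_def leaf_image_def)

lemma stg_D0_inner: "u @ [b] \<in> inodes Tm \<Longrightarrow> stg D\<^sub>0 (SOut u b) = SIn (u @ [b])"
  by (simp add: stg_D0_SOut)

lemma stg_D0_leaf:
  assumes "i < N" "leaves Tm ! i = u @ [b]"
  shows "stg D\<^sub>0 (SOut u b) = MIn (butlast (leaves Tp ! \<sigma> i)) (last (leaves Tp ! \<sigma> i))"
proof -
  have "u @ [b] \<notin> inodes Tm"
    using assms leaf_notin_inodes nth_mem by metis
  then show ?thesis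
    using assms leaf_image_nth[of i] sigma_leaf[of i] by (simp add: stg_D0_SOut tp_up_def)
qed

lemma F_inner: "u @ [b] \<in> inodes Tm \<Longrightarrow> F (SOut u b, x) = (SOut (u @ [b]) (x 0), \<lambda>k. x (Suc k))"
  by (simp add: token_step_SIn stg_D0_inner)

lemma F_leaf:
  "i < N \<Longrightarrow> leaves Tm ! i = u @ [b] \<Longrightarrow>
   F (SOut u b, x) = (MOut (butlast (leaves Tp ! \<sigma> i)), prepend [last (leaves Tp ! \<sigma> i)] x)"
  by (simp add: token_step_MIn stg_D0_leaf)

lemma F_up: "w \<noteq> [] \<Longrightarrow> F (MOut w, x) = (MOut (butlast w), prepend [last w] x)"
  by (simp add: token_step_MIn D0_simps tp_up_def)

lemma F_root: "F (MOut [], x) = (SOut [] (x 0), \<lambda>k. x (Suc k))"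
  by (simp add: token_step_SIn D0_simps tp_up_def)

lemma ascend:
  "(F ^^ length w) (MOut w, x) = (MOut [], prepend w x) \<and>
   walk_sum F root_weight (MOut w, x) (length w) = 0"
proof (induction w arbitrary: x rule: rev_induct)
  case (snoc b w)
  then show ?case
    by (simp add: funpow_Suc_right walk_sum_Suc_shift F_up at_root_def prepend_append
        del: funpow.simps)
qed simp

lemma descend:
  "a @ r \<in> set (leaves Tm) \<Longrightarrow> r \<noteq> [] \<Longrightarrow>
   (F ^^ (length r - 1)) (SOut a (hd r), prepend (tl r) x) = (SOut (butlast (a @ r)) (last r), x) \<and>
   walk_sum F root_weight (SOut a (hd r), prepend (tl r) x) (length r - 1) = 0"
proof (induction r arbitrary: a)
  case (Cons b r)
  show ?case
  proof (cases r)
    case (Cons c r')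
    have "a @ [b] \<in> inodes Tm"
      using prefix_of_leaf_in_inodes[of "a @ [b]" "c # r'" Tm] Cons.prems Cons by simp
    then have "F (SOut a b, prepend (c # r') x) = (SOut (a @ [b]) c, prepend r' x)"
      by (simp add: F_inner)
    then show ?thesis
      using Cons.IH[of "a @ [b]"] Cons.prems Cons
      by (simp add: funpow_Suc_right walk_sum_Suc_shift at_root_def del: funpow.simps)
  qed simp
qed simp

lemma root_excursion: "excursion F root_weight at_root (MOut [], y) (MOut [], g y) 1"
proof -
  obtain i where i: "i < N" "in_cone (leaves Tm ! i) y"
    using ex_leaf_in_cone[of Tm y] by (metis in_set_conv_nth)
  define u v z where "u = leaves Tm ! i" and "v = leaves Tp ! \<sigma> i"
    and "z = (\<lambda>k. y (k + length u))"
  have u_leaf: "u \<in> set (leaves Tm)"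
    using i(1) by (simp add: u_def)
  then have u: "u \<in> set (leaves Tm)" "u \<noteq> []"
    using Nil_notin_leaves[OF Tm_not_Leaf] by auto
  have v: "v \<noteq> []"
    using sigma_leaf[OF i(1)] by (simp add: v_def)
  have y: "y = prepend u z" and gy: "g y = prepend v z"
    using prepend_drop[of u y] velem_on_cone[OF i] i by (simp_all add: u_def v_def z_def)
  have s1: "F (MOut [], y) = (SOut [] (hd u), prepend (tl u) z)"
    using u(2) y F_root by (cases u) simp_all
  note s2 = descend[of "[]" u z, simplified, OF u]
  have s3: "F (SOut (butlast u) (last u), z) = (MOut (butlast v), prepend [last v] z)"
    using F_leaf[OF i(1), of "butlast u" "last u" z] u(2) by (simp add: u_def v_def)
  have s4: "(F ^^ length (butlast v)) (MOut (butlast v), prepend [last v] z) = (MOut [], g y)"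
    "walk_sum F root_weight (MOut (butlast v), prepend [last v] z) (length (butlast v)) = 0"
    using ascend[of "butlast v" "prepend [last v] z"] v gy by (simp_all add: prepend_append[symmetric])
  define a b where "a = length u - 1" and "b = length (butlast v)"
  have t1: "(F ^^ Suc a) (MOut [], y) = (SOut (butlast u) (last u), z)"
    and w1: "walk_sum F root_weight (MOut [], y) (Suc a) = 1"
    using s1 s2 by (simp_all add: a_def funpow_Suc_right walk_sum_Suc_shift at_root_def
        del: funpow.simps)
  have t2: "(F ^^ Suc b) (SOut (butlast u) (last u), z) = (MOut [], g y)"
    and w2: "walk_sum F root_weight (SOut (butlast u) (last u), z) (Suc b) = 0"
    using s3 s4 by (simp_all add: b_def funpow_Suc_right walk_sum_Suc_shift at_root_def
        del: funpow.simps)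
  have "(F ^^ (Suc a + Suc b)) (MOut [], y) = (MOut [], g y)"
    using t1 t2 by (simp only: funpow_add_apply)
  moreover have "walk_sum F root_weight (MOut [], y) (Suc a + Suc b) = 1"
    using t1 w1 w2 walk_sum_add[of F root_weight "(MOut [], y)" "Suc a" "Suc b"] by simp
  ultimately show ?thesis
    using excursion_of_walk_sum[of "Suc a + Suc b" F "(MOut [], y)" "(MOut [], g y)" at_root]
    by (simp add: at_root_def)
qed

lemma source_of_SIn:
  "p \<in> oports D\<^sub>0 \<Longrightarrow> stg D\<^sub>0 p = SIn a \<Longrightarrow> p = (if a = [] then MOut [] else SOut (butlast a) (last a))"
  using child_in_leaves[of _ Tm] leaf_image_in_leaves
  by (auto simp: oports_def D0_simps stg_D0_SOut tp_up_eq_SIn_iff tp_up_def split: if_splits)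

lemma source_of_MIn:
  "p \<in> oports D\<^sub>0 \<Longrightarrow> stg D\<^sub>0 p = MIn w c \<Longrightarrow>
   p = MOut (w @ [c]) \<and> w @ [c] \<in> inodes Tp \<or>
   (\<exists>u b. p = SOut u b \<and> u @ [b] \<in> set (leaves Tm) \<and> leaf_image (u @ [b]) = w @ [c])"
  using child_in_leaves[of _ Tm] by (auto simp: oports_def D0_simps stg_D0_SOut tp_up_eq_MIn_iff split: if_splits)

lemma inj_on_stg_D0: "inj_on (stg D\<^sub>0) (oports D\<^sub>0)"
proof (rule inj_onI)
  fix p q assume p: "p \<in> oports D\<^sub>0" and q: "q \<in> oports D\<^sub>0" and eq: "stg D\<^sub>0 p = stg D\<^sub>0 q"
  show "p = q"
  proof (cases "stg D\<^sub>0 p")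
    case (SIn a)
    then show ?thesis
      using source_of_SIn[OF p] source_of_SIn[OF q] eq by metis
  next
    case (MIn w c)
    have not_both: False if "w @ [c] \<in> inodes Tp" "u @ [b] \<in> set (leaves Tm)"
      "leaf_image (u @ [b]) = w @ [c]" for u b
      using that leaf_image_in_leaves leaf_notin_inodes by metis
    show ?thesis
      using source_of_MIn[OF p MIn] source_of_MIn[OF q eq[symmetric, unfolded MIn]]
    proof (elim disjE exE conjE)
      fix u b u' b'
      assume "p = SOut u b" "u @ [b] \<in> set (leaves Tm)" "leaf_image (u @ [b]) = w @ [c]"
        "q = SOut u' b'" "u' @ [b'] \<in> set (leaves Tm)" "leaf_image (u' @ [b']) = w @ [c]"
      then show ?thesis
        using leaf_image_inj[of "u @ [b]" "u' @ [b']"] by simp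
    qed (auto dest: not_both)
  qed
qed

lemma well_formed_D0: "well_formed D\<^sub>0"
proof -
  have "idst (stg D\<^sub>0 p) \<in> vtxs D\<^sub>0" if "p \<in> oports D\<^sub>0" for p
    using that child_in_leaves[of _ Tm] leaf_image_in_leaves butlast_leaf_in_inodes butlast_in_inodes
      Nil_in_inodes[OF Tm_not_Leaf]
    by (auto simp: oports_def vtxs_def D0_simps stg_D0_SOut tp_up_def)
  moreover have "card (inodes Tm) = card (inodes Tp)"
    using card_inodes[of Tm] card_inodes[of Tp] length_leaves by simp
  ultimately show ?thesis
    using inj_on_stg_D0 by (simp add: well_formed_def D0_simps finite_inodes)
qed

definition root_return :: "token \<Rightarrow> token" where
  "root_return st = (MOut [], g (snd st))"

lemma induces_root_return: "induces F root_weight at_root root_return (\<lambda>_. 1)"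
  unfolding induces_def
proof (intro allI impI conjI)
  fix st assume "at_root st"
  then have "st = (MOut [], snd st)"
    by (simp add: at_root_def prod_eq_iff)
  then show "excursion F root_weight at_root st (root_return st) 1"
    using root_excursion[of "snd st"] by (simp add: root_return_def)
qed (simp add: root_return_def at_root_def)

lemma root_return_funpow: "(root_return ^^ j) (MOut [], y) = (MOut [], (g ^^ j) y)"
  by (induction j) (simp_all add: root_return_def)

lemma cycle_weight_root_iff: "cycle_weight F root_weight (MOut [], z) l \<longleftrightarrow> least_period g z l"
proof -
  have "cycle_weight F root_weight (MOut [], z) l \<longleftrightarrow> cycle_weight root_return (\<lambda>_. 1) (MOut [], z) l"
    by (rule induces_cycle_weight_iff[OF induces_root_return at_root_root])
  also have "\<dots> \<longleftrightarrow> least_period g z l"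
    by (simp add: cycle_weight_def walk_sum_def least_period_def root_return_funpow)
  finally show ?thesis .
qed

lemma F_at_root_return_times:
  "(F ^^ induced_time F at_root root_return (MOut [], y) j) (MOut [], y) = (MOut [], (g ^^ j) y)"
  using induced_time[OF induces_root_return at_root_root] root_return_funpow by simp

lemma inj_g: "inj g"
proof (rule injI)
  fix y y' assume eq: "g y = g y'"
  obtain i where i: "i < N" "in_cone (leaves Tm ! i) y"
    using ex_leaf_in_cone[of Tm y] by (metis in_set_conv_nth)
  obtain j where j: "j < N" "in_cone (leaves Tm ! j) y'"
    using ex_leaf_in_cone[of Tm y'] by (metis in_set_conv_nth)
  have "leaves Tp ! \<sigma> i = leaves Tp ! \<sigma> j"
    and tails: "(\<lambda>k. y (k + length (leaves Tm ! i))) = (\<lambda>k. y' (k + length (leaves Tm ! j)))"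
    using prepend_leaf_inj[of "leaves Tp ! \<sigma> i" Tp "leaves Tp ! \<sigma> j"] sigma_leaf[OF i(1)]
      sigma_leaf[OF j(1)] eq velem_on_cone[OF i] velem_on_cone[OF j] by auto
  then have "i = j"
    using sigma_leaf_inj i(1) j(1) by blast
  then show "y = y'"
    using prepend_drop[OF i(2)] prepend_drop[OF j(2)] tails by metis
qed

lemma reach_root_from_SOut: "u \<in> inodes Tm \<Longrightarrow> \<exists>t. at_root ((F ^^ t) (SOut u b, x))"
proof (induction "height Tm - length u" arbitrary: u b x rule: less_induct)
  case less
  show ?case
  proof (cases "u @ [b] \<in> inodes Tm")
    case True
    have "height Tm - length (u @ [b]) < height Tm - length u"
      using length_inode_less_height[OF True] by simp
    then obtain t where "at_root ((F ^^ t) (SOut (u @ [b]) (x 0), \<lambda>k. x (Suc k)))"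
      using less True by blast
    then have "at_root ((F ^^ Suc t) (SOut u b, x))"
      using F_inner[OF True] by (simp add: funpow_Suc_right del: funpow.simps)
    then show ?thesis ..
  next
    case False
    then obtain i where i: "i < N" "leaves Tm ! i = u @ [b]"
      using child_in_leaves less.prems by (metis in_set_conv_nth)
    define v where "v = leaves Tp ! \<sigma> i"
    have "(F ^^ Suc (length (butlast v))) (SOut u b, x) =
        (F ^^ length (butlast v)) (MOut (butlast v), prepend [last v] x)"
      using F_leaf[OF i, of x, folded v_def] by (simp only: funpow_Suc_right comp_apply)
    then have "at_root ((F ^^ Suc (length (butlast v))) (SOut u b, x))"
      using ascend[of "butlast v" "prepend [last v] x"] by (simp only: at_root_def fst_conv)
    then show ?thesis ..
  qed
qed

lemma reach_root:
  assumes "on_edges D\<^sub>0 st"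
  shows "\<exists>t. at_root ((F ^^ t) st)"
proof -
  obtain p x where st: "st = (p, x)"
    by fastforce
  show ?thesis
  proof (cases p)
    case (SOut u b)
    then show ?thesis
      using assms reach_root_from_SOut st by (simp add: on_edges_def oports_def D0_simps)
  next
    case (MOut w)
    then have "at_root ((F ^^ length w) st)"
      using ascend st by (simp add: at_root_def)
    then show ?thesis ..
  qed
qed

lemma cycle_weight_imp_least_period:
  assumes "on_edges D\<^sub>0 st" "cycle_weight F root_weight st l"
  shows "\<exists>z. least_period g z l"
proof -
  obtain t where "at_root ((F ^^ t) st)"
    using reach_root[OF assms(1)] by blast
  then have "(F ^^ t) st = (MOut [], snd ((F ^^ t) st))"
    by (simp add: at_root_def prod_eq_iff)
  then show ?thesis
    using cycle_weight_funpow[OF assms(2), of t] cycle_weight_root_iff by metis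
qed

lemma cycle_weight_imp_funpow_fixed:
  assumes "cycle_weight F root_weight ((F ^^ t) (MOut [], y)) l"
  shows "(g ^^ l) y = y"
proof -
  let ?T = "induced_time F at_root root_return (MOut [], y)"
  have "t \<le> ?T t"
    using strict_mono_induced_time[OF induces_root_return at_root_root]
    by (rule strict_mono_imp_increasing)
  then have "(F ^^ ?T t) (MOut [], y) = (F ^^ (?T t - t)) ((F ^^ t) (MOut [], y))"
    using funpow_add_apply[of t "?T t - t" F] by simp
  then have "cycle_weight F root_weight (MOut [], (g ^^ t) y) l"
    using cycle_weight_funpow[OF assms] F_at_root_return_times by metis
  then have "(g ^^ l) ((g ^^ t) y) = (g ^^ t) y"
    by (simp add: cycle_weight_root_iff least_period_def)
  then have "(g ^^ t) ((g ^^ l) y) = (g ^^ t) y"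
    by (metis funpow_add_apply add.commute)
  then show ?thesis
    using inj_fn[OF inj_g, of t] by (simp add: inj_def)
qed

lemma finite_orbit_if_finite_order:
  assumes "0 < k" "g ^^ k = id" "on_edges D\<^sub>0 st"
  shows "finite (range (\<lambda>t. (F ^^ t) st))"
proof -
  obtain t0 where "at_root ((F ^^ t0) st)"
    using reach_root[OF assms(3)] by blast
  then obtain z where z: "(F ^^ t0) st = (MOut [], z)"
    by (metis at_root_def prod.collapse)
  let ?c = "induced_time F at_root root_return (MOut [], z) k"
  have "0 < ?c"
    using induced_time_pos_iff[OF induces_root_return at_root_root] assms(1) by blast
  moreover have "(F ^^ ?c) ((F ^^ t0) st) = (F ^^ t0) st"
    using F_at_root_return_times[of z k] assms(2) z by simp
  ultimately show ?thesis
    by (rule finite_orbit_if_eventually_periodic)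
qed

definition invariant :: "sdiag \<Rightarrow> bool" where
  "invariant D \<longleftrightarrow> well_formed D \<and> oports D \<subseteq> oports D\<^sub>0 \<and>
     induces F root_weight (on_edges D) (token_step D) (slb D \<circ> fst) \<and>
     (\<forall>l\<in>#sloops D. \<exists>z. least_period g z l) \<and>
     (\<forall>y. (\<exists>t. on_edges D ((F ^^ t) (MOut [], y))) \<or> (\<exists>l\<in>#sloops D. (g ^^ l) y = y))"

lemma invariant_D0: "invariant D\<^sub>0"
proof -
  have "induces F root_weight (on_edges D\<^sub>0) F (slb D\<^sub>0 \<circ> fst)"
    unfolding induces_def
    using well_formed_D0 on_edges_token_step excursion_step[of F root_weight]
    by (auto simp: well_formed_def D0_simps at_root_def comp_def)
  moreover have "on_edges D\<^sub>0 (MOut [], y)" for y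
    using Nil_in_inodes[OF Tp_not_Leaf] by (simp add: on_edges_def oports_def D0_simps)
  then have "\<exists>t. on_edges D\<^sub>0 ((F ^^ t) (MOut [], y))" for y
    by (intro exI[of _ 0]) simp
  ultimately show ?thesis
    unfolding invariant_def using well_formed_D0 by (simp add: D0_simps)
qed

lemma invariantD:
  assumes "invariant D"
  shows "well_formed D" "oports D \<subseteq> oports D\<^sub>0"
    "induces F root_weight (on_edges D) (token_step D) (slb D \<circ> fst)"
    "\<forall>l\<in>#sloops D. \<exists>z. least_period g z l"
    "\<forall>y. (\<exists>t. on_edges D ((F ^^ t) (MOut [], y))) \<or> (\<exists>l\<in>#sloops D. (g ^^ l) y = y)"
  using assms by (simp_all add: invariant_def)

lemma least_period_of_token_cycle:
  assumes inv: "invariant D" and st: "on_edges D st"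
    and cw: "cycle_weight (token_step D) (slb D \<circ> fst) st l"
  shows "\<exists>z. least_period g z l"
proof -
  have "cycle_weight F root_weight st l"
    using induces_cycle_weight_iff[OF invariantD(3)[OF inv] st] cw by simp
  moreover have "on_edges D\<^sub>0 st"
    using st invariantD(2)[OF inv] by (auto simp: on_edges_def)
  ultimately show ?thesis
    using cycle_weight_imp_least_period by blast
qed

context
  fixes D m s
  assumes inv: "invariant D" and m: "m \<in> sM D" and s: "s \<in> sS D" and ms: "stg D (MOut m) = SIn s"
begin

lemma new_loop_least_period:
  assumes "l \<in># new_loops D m s"
  shows "\<exists>z. least_period g z l"
proof -
  obtain b where "cycle_weight (token_step D) (slb D \<circ> fst) (SOut s b, undefined) l"
    using new_loop_cycle_weight[OF invariantD(1)[OF inv] m s ms assms] by blast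
  moreover have "on_edges D (SOut s b, undefined)"
    using s by (simp add: on_edges_def oports_def)
  ultimately show ?thesis
    using least_period_of_token_cycle[OF inv] by blast
qed

lemma cover_rule1_apply:
  assumes t: "on_edges D ((F ^^ t) (MOut [], y))"
  shows "(\<exists>t. on_edges (rule1_apply D m s) ((F ^^ t) (MOut [], y))) \<or> (\<exists>l\<in>#new_loops D m s. (g ^^ l) y = y)"
proof -
  let ?G = "token_step D" and ?st = "(F ^^ t) (MOut [], y)"
  note ind = invariantD(3)[OF inv]
  obtain k where k: "on_edges (rule1_apply D m s) ((?G ^^ k) ?st) \<or>
      (\<exists>l\<in>#new_loops D m s. cycle_weight ?G (slb D \<circ> fst) ((?G ^^ k) ?st) l)"
    using rule1_apply_escape[OF invariantD(1)[OF inv] m s ms t] by blast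
  let ?T = "induced_time F (on_edges D) ?G ?st k"
  have T: "(F ^^ (t + ?T)) (MOut [], y) = (?G ^^ k) ?st"
    using induced_time[OF ind t, of k] by (simp add: funpow_add_apply)
  have on_D: "on_edges D ((?G ^^ k) ?st)"
    by (rule induces_closed[OF ind t])
  from k show ?thesis
  proof (elim disjE bexE)
    assume "on_edges (rule1_apply D m s) ((?G ^^ k) ?st)"
    then have "on_edges (rule1_apply D m s) ((F ^^ (t + ?T)) (MOut [], y))"
      using T by simp
    then show ?thesis by blast
  next
    fix l assume l: "l \<in># new_loops D m s" and cw: "cycle_weight ?G (slb D \<circ> fst) ((?G ^^ k) ?st) l"
    have "cycle_weight F root_weight ((F ^^ (t + ?T)) (MOut [], y)) l"
      using induces_cycle_weight_iff[OF ind on_D] cw T by simp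
    then show ?thesis
      using cycle_weight_imp_funpow_fixed l by blast
  qed
qed

lemma invariant_rule1_apply: "invariant (rule1_apply D m s)"
proof -
  note wf = invariantD(1)[OF inv]
  have sub: "oports (rule1_apply D m s) \<subseteq> oports D"
    by (auto simp: oports_rule1_apply)
  have "induces F root_weight (on_edges (rule1_apply D m s)) (token_step (rule1_apply D m s))
      (slb (rule1_apply D m s) \<circ> fst)"
    using induces_trans[OF invariantD(3)[OF inv] induces_rule1_apply[OF wf m s ms]] sub
    by (auto simp: on_edges_def)
  moreover have "oports (rule1_apply D m s) \<subseteq> oports D\<^sub>0"
    using sub invariantD(2)[OF inv] by blast
  moreover have "\<forall>l\<in>#sloops (rule1_apply D m s). \<exists>z. least_period g z l"
    using invariantD(4)[OF inv] new_loop_least_period by (auto simp: rule1_apply_simps)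
  moreover have "(\<exists>t. on_edges (rule1_apply D m s) ((F ^^ t) (MOut [], y))) \<or>
      (\<exists>l\<in>#sloops (rule1_apply D m s). (g ^^ l) y = y)" for y
    using invariantD(5)[OF inv] cover_rule1_apply by (fastforce simp: rule1_apply_simps)
  ultimately show ?thesis
    using well_formed_rule1_apply[OF wf m s ms] by (simp add: invariant_def)
qed

end

lemma invariant_reachable: "rule1_step\<^sup>*\<^sup>* D\<^sub>0 D \<Longrightarrow> invariant D"
  by (induction rule: rtranclp_induct) (auto simp: rule1_step_def invariant_D0 invariant_rule1_apply)

lemma finite_order_if_no_vertices:
  assumes "invariant D" "sS D = {}" "sM D = {}"
  shows "(\<exists>k>0. g ^^ k = id) \<and> (LEAST k. 0 < k \<and> g ^^ k = id) = Lcm (set_mset (sloops D))"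
proof (rule order_eq_Lcm)
  have "\<not> on_edges D st" for st
    using assms(2,3) by (simp add: on_edges_def oports_def)
  then show "\<forall>y. \<exists>l\<in>set_mset (sloops D). (g ^^ l) y = y"
    using invariantD(5)[OF assms(1)] by auto
  show "\<forall>l\<in>set_mset (sloops D). \<exists>z. least_period g z l"
    using invariantD(4)[OF assms(1)] by simp
qed simp

lemma not_finite_order_if_merge_cycle:
  assumes inv: "invariant D" and es: "merge_cycle D es"
  shows "\<not> (\<exists>k>0. g ^^ k = id)"
proof
  assume "\<exists>k>0. g ^^ k = id"
  then obtain k where k: "0 < k" "g ^^ k = id" by blast
  obtain x where x: "infinite (range (\<lambda>j. (token_step D ^^ j) (es ! 0, x)))"
    using merge_cycle_infinite_orbit[OF es] by blast
  have start: "on_edges D (es ! 0, x)"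
    using merge_cycle_start[OF es] by (simp add: on_edges_def)
  then have "on_edges D\<^sub>0 (es ! 0, x)"
    using invariantD(2)[OF inv] by (auto simp: on_edges_def)
  then have "finite (range (\<lambda>t. (F ^^ t) (es ! 0, x)))"
    by (rule finite_orbit_if_finite_order[OF k])
  then show False
    using x induced_orbit_subset[OF invariantD(3)[OF inv] start] finite_subset by blast
qed

lemma finite_orbit_length_of_merge_cycle:
  assumes inv: "invariant D" and es: "merge_cycle D es"
  shows "finite_orbit_length g (sum_list (map (slb D) es))"
proof -
  obtain x where "cycle_weight (token_step D) (slb D \<circ> fst) (es ! 0, x) (sum_list (map (slb D) es))"
    using merge_cycle_cycle_weight[OF es] by blast
  moreover have "on_edges D (es ! 0, x)"
    using merge_cycle_start[OF es] by (simp add: on_edges_def)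
  ultimately obtain z where "least_period g z (sum_list (map (slb D) es))"
    using least_period_of_token_cycle[OF inv] by blast
  then show ?thesis
    unfolding finite_orbit_length_def by (blast dest: least_period_orbit)
qed

lemma infinite_order_if_vertices:
  assumes inv: "invariant D" and red: "reduced D" and ne: "sS D \<union> sM D \<noteq> {}"
  shows "\<not> (\<exists>k>0. g ^^ k = id) \<and> (\<exists>es. is_cycle D es) \<and>
    (\<forall>es. merge_cycle D es \<longrightarrow> finite_orbit_length g (sum_list (map (slb D) es)))"
proof -
  obtain es where "merge_cycle D es"
    using reduced_has_merge_cycle[OF invariantD(1)[OF inv] red ne] by blast
  then show ?thesis
    using not_finite_order_if_merge_cycle[OF inv] finite_orbit_length_of_merge_cycle[OF inv]
    by (auto simp: merge_cycle_def)
qed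

end

lemma rule1_steps_from_Leaf: "rule1_step\<^sup>*\<^sup>* (D0 Leaf Leaf \<sigma>) D \<Longrightarrow> D = D0 Leaf Leaf \<sigma>"
  by (erule converse_rtranclpE) (auto simp: rule1_step_def D0_def)

lemma velem_Leaf:
  assumes "\<sigma> 0 = 0"
  shows "velem Leaf Leaf \<sigma> = id"
proof
  fix x
  have "(THE i. i < length (leaves Leaf) \<and> in_cone (leaves Leaf ! i) x) = 0"
    by (rule the_equality) (auto simp: in_cone_def)
  then show "velem Leaf Leaf \<sigma> x = id x"
    using assms by (simp add: velem_def)
qed

theorem mainTheorem2:
  fixes Tm Tp :: tree and \<sigma> :: "nat \<Rightarrow> nat" and D :: sdiag
  assumes "length (leaves Tm) = length (leaves Tp)"
    and "bij_betw \<sigma> {..<length (leaves Tm)} {..<length (leaves Tm)}"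
    and "rule1_step\<^sup>*\<^sup>* (D0 Tm Tp \<sigma>) D"
    and "reduced D"
  shows "(sS D = {} \<and> sM D = {} \<longrightarrow>
            (\<exists>k>0. (velem Tm Tp \<sigma> ^^ k) = id) \<and>
            (LEAST k. k > 0 \<and> (velem Tm Tp \<sigma> ^^ k) = id) = Lcm (set_mset (sloops D)))
       \<and> (sS D \<union> sM D \<noteq> {} \<longrightarrow>
            \<not> (\<exists>k>0. (velem Tm Tp \<sigma> ^^ k) = id) \<and>
            (\<exists>es. is_cycle D es) \<and>
            (\<forall>es. merge_cycle D es \<longrightarrow>
                 finite_orbit_length (velem Tm Tp \<sigma>) (sum_list (map (slb D) es))))"
proof (cases "Tm = Leaf")
  case True
  then have Tp: "Tp = Leaf"
    using assms(1) length_leaves_eq_1_iff[of Tp] by simp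
  have "\<sigma> 0 \<in> {..<length (leaves Tm)}"
    using bij_betwE[OF assms(2)] True by simp
  with True have "\<sigma> 0 = 0"
    by simp
  then have "velem Tm Tp \<sigma> = id" and "D = D0 Tm Tp \<sigma>"
    using True Tp velem_Leaf rule1_steps_from_Leaf assms(3) by simp_all
  moreover have "(LEAST k. k > 0 \<and> id ^^ k = id) = (1::nat)"
    by (rule Least_equality) auto
  ultimately show ?thesis
    using True Tp by (auto simp: D0_def)
next
  case False
  then interpret thompson_element Tm Tp \<sigma>
    using assms(1,2) by unfold_locales
  have "invariant D"
    using assms(3) by (rule invariant_reachable)
  then show ?thesis
    using finite_order_if_no_vertices infinite_order_if_vertices assms(4) by blast
qed

end
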